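(* Let $\Pi=(\Sigma_{\mathrm{in}},\Sigma_{\mathrm{out}},C,r)$ be any LCL problem with checkability radius $r$. Then there exists a node-edge checkable problem $\Pi'$ with input alphabet $\Sigma_{\mathrm{in}}$ that is equivalent to $\Pi$ on trees: on any tree with any input labeling, given a solution for $\Pi'$ one can compute a solution for $\Pi$ in $O(r)$ rounds, and given a solution for $\Pi$ one can compute a solution for $\Pi'$ in $O(r)$ rounds.
   Context: An LCL problem $\Pi=(\Sigma_{\mathrm{in}},\Sigma_{\mathrm{out}},C,r)$: $\Sigma_{\mathrm{in}},\Sigma_{\mathrm{out}}$ finite label sets, $r$ a constant, $C$ a finite set of pairs $(H,v)$ with $H$ a graph, $v$ a node of $H$ of radius at most $r$ in $H$, every half-edge (node-edge pair) of $H$ labeled with an input and an output label; solving $\Pi$ on a bounded-degree graph with input labels on half-edges means assigning output labels to half-edges so that every labeled radius-$r$ ball is isomorphic to an element of $C$. A node-edge checkable problem $\Pi'=(\Sigma'_{\mathrm{in}},\Sigma'_{\mathrm{out}},C'_W,C'_B)$: $\Sigma'_{\mathrm{in}},\Sigma'_{\mathrm{out}}$ finite label sets; $C'_W$ and $C'_B$ are sets of multisets of pairs $(i,o)\in\Sigma'_{\mathrm{in}}\times\Sigma'_{\mathrm{out}}$. Solving $\Pi'$ on a graph whose half-edges carry input labels means assigning an output label to every half-edge such that for every node the multiset of (input, output) pairs on its incident half-edges lies in $C'_W$ and for every edge the multiset of (input, output) pairs of its two half-edges lies in $C'_B$. Rounds refer to synchronous distributed communication rounds on the input graph. *)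

theory Defs
  imports Main "HOL-Library.Multiset"
begin

section \<open>Graphs on natural-number vertices (vertex names double as unique IDs)\<close>

text \<open>A half-edge is a pair (v,u) with E v u (the half-edge of edge {v,u} at v).\<close>

definition adj :: "nat set \<Rightarrow> (nat \<Rightarrow> nat \<Rightarrow> bool) \<Rightarrow> nat \<Rightarrow> nat \<Rightarrow> bool" where
  "adj V E x y \<longleftrightarrow> x \<in> V \<and> y \<in> V \<and> E x y"

definition simple_graph :: "nat set \<Rightarrow> (nat \<Rightarrow> nat \<Rightarrow> bool) \<Rightarrow> bool" where
  "simple_graph V E \<longleftrightarrow> finite V \<and> (\<forall>x y. E x y \<longrightarrow> x \<in> V \<and> y \<in> V)
     \<and> (\<forall>x y. E x y \<longrightarrow> E y x) \<and> (\<forall>x. \<not> E x x)"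

definition connected_graph :: "nat set \<Rightarrow> (nat \<Rightarrow> nat \<Rightarrow> bool) \<Rightarrow> bool" where
  "connected_graph V E \<longleftrightarrow> (\<forall>x\<in>V. \<forall>y\<in>V. (adj V E)\<^sup>*\<^sup>* x y)"

definition is_cycle :: "(nat \<Rightarrow> nat \<Rightarrow> bool) \<Rightarrow> nat list \<Rightarrow> bool" where
  "is_cycle E xs \<longleftrightarrow> length xs \<ge> 3 \<and> distinct xs
     \<and> (\<forall>k. Suc k < length xs \<longrightarrow> E (xs ! k) (xs ! Suc k)) \<and> E (last xs) (hd xs)"

definition is_tree :: "nat set \<Rightarrow> (nat \<Rightarrow> nat \<Rightarrow> bool) \<Rightarrow> bool" where
  "is_tree V E \<longleftrightarrow> simple_graph V E \<and> V \<noteq> {} \<and> connected_graph V E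
     \<and> (\<nexists>xs. is_cycle E xs)"

definition max_degree_le :: "nat \<Rightarrow> nat set \<Rightarrow> (nat \<Rightarrow> nat \<Rightarrow> bool) \<Rightarrow> bool" where
  "max_degree_le \<Delta> V E \<longleftrightarrow> (\<forall>v\<in>V. card {u. E v u} \<le> \<Delta>)"

definition bd_tree :: "nat \<Rightarrow> nat set \<Rightarrow> (nat \<Rightarrow> nat \<Rightarrow> bool) \<Rightarrow> bool" where
  "bd_tree \<Delta> V E \<longleftrightarrow> is_tree V E \<and> max_degree_le \<Delta> V E"

definition ball :: "nat set \<Rightarrow> (nat \<Rightarrow> nat \<Rightarrow> bool) \<Rightarrow> nat \<Rightarrow> nat \<Rightarrow> nat set" where
  "ball V E T v = {x. \<exists>k\<le>T. (adj V E ^^ k) v x}"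

record ('i, 'o) cgraph =
  cV :: "nat set"
  cE :: "nat \<Rightarrow> nat \<Rightarrow> bool"
  cin :: "nat \<times> nat \<Rightarrow> 'i"
  cout :: "nat \<times> nat \<Rightarrow> 'o"
  ctr :: nat

definition is_lcl :: "'i set \<Rightarrow> 'o set \<Rightarrow> ('i, 'o) cgraph set \<Rightarrow> nat \<Rightarrow> bool" where
  "is_lcl Sin Sout C r \<longleftrightarrow> finite Sin \<and> finite Sout \<and> finite C \<and>
     (\<forall>H\<in>C. simple_graph (cV H) (cE H) \<and> ctr H \<in> cV H
        \<and> cV H \<subseteq> ball (cV H) (cE H) r (ctr H)
        \<and> (\<forall>x y. cE H x y \<longrightarrow> cin H (x, y) \<in> Sin \<and> cout H (x, y) \<in> Sout))"

definition ball_iso :: "nat set \<Rightarrow> (nat \<Rightarrow> nat \<Rightarrow> bool) \<Rightarrow> (nat \<times> nat \<Rightarrow> 'i)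
    \<Rightarrow> (nat \<times> nat \<Rightarrow> 'o) \<Rightarrow> nat \<Rightarrow> nat \<Rightarrow> ('i, 'o) cgraph \<Rightarrow> bool" where
  "ball_iso V E i out r v H \<longleftrightarrow> (\<exists>f. bij_betw f (ball V E r v) (cV H) \<and> f v = ctr H
     \<and> (\<forall>x\<in>ball V E r v. \<forall>y\<in>ball V E r v.
          (E x y \<longleftrightarrow> cE H (f x) (f y))
          \<and> (E x y \<longrightarrow> i (x, y) = cin H (f x, f y) \<and> out (x, y) = cout H (f x, f y))))"

definition solves_lcl :: "'i set \<Rightarrow> 'o set \<Rightarrow> ('i, 'o) cgraph set \<Rightarrow> nat
    \<Rightarrow> nat set \<Rightarrow> (nat \<Rightarrow> nat \<Rightarrow> bool) \<Rightarrow> (nat \<times> nat \<Rightarrow> 'i) \<Rightarrow> (nat \<times> nat \<Rightarrow> 'o) \<Rightarrow> bool" where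
  "solves_lcl Sin Sout C r V E i out \<longleftrightarrow>
     (\<forall>x y. E x y \<longrightarrow> out (x, y) \<in> Sout) \<and> (\<forall>v\<in>V. \<exists>H\<in>C. ball_iso V E i out r v H)"

definition is_necp :: "'i set \<Rightarrow> 'o set \<Rightarrow> ('i \<times> 'o) multiset set \<Rightarrow> ('i \<times> 'o) multiset set \<Rightarrow> bool" where
  "is_necp Sin Sout CW CB \<longleftrightarrow> finite Sin \<and> finite Sout \<and> finite CW \<and> finite CB
     \<and> (\<forall>M\<in>CW. set_mset M \<subseteq> Sin \<times> Sout) \<and> (\<forall>M\<in>CB. set_mset M \<subseteq> Sin \<times> Sout)"

definition solves_necp :: "'o set \<Rightarrow> ('i \<times> 'o) multiset set \<Rightarrow> ('i \<times> 'o) multiset set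
    \<Rightarrow> nat set \<Rightarrow> (nat \<Rightarrow> nat \<Rightarrow> bool) \<Rightarrow> (nat \<times> nat \<Rightarrow> 'i) \<Rightarrow> (nat \<times> nat \<Rightarrow> 'o) \<Rightarrow> bool" where
  "solves_necp Sout CW CB V E i out \<longleftrightarrow>
     (\<forall>x y. E x y \<longrightarrow> out (x, y) \<in> Sout)
     \<and> (\<forall>v\<in>V. image_mset (\<lambda>u. (i (v, u), out (v, u))) (mset_set {u. E v u}) \<in> CW)
     \<and> (\<forall>u v. E u v \<longrightarrow> {# (i (u, v), out (u, v)), (i (v, u), out (v, u)) #} \<in> CB)"

definition same_view :: "nat \<Rightarrow> nat set \<Rightarrow> (nat \<Rightarrow> nat \<Rightarrow> bool) \<Rightarrow> (nat \<times> nat \<Rightarrow> 'a)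
    \<Rightarrow> nat set \<Rightarrow> (nat \<Rightarrow> nat \<Rightarrow> bool) \<Rightarrow> (nat \<times> nat \<Rightarrow> 'a) \<Rightarrow> nat \<Rightarrow> bool" where
  "same_view T V E l V' E' l' v \<longleftrightarrow> ball V E T v = ball V' E' T v
     \<and> (\<forall>x\<in>ball V E T v. \<forall>y\<in>ball V E T v.
          (E x y \<longleftrightarrow> E' x y) \<and> (E x y \<longrightarrow> l (x, y) = l' (x, y)))"

text \<open>A map from labeled instances to half-edge labelings is computable in T rounds on
  trees of maximum degree at most Delta if the output on every half-edge of v depends only
  on the radius-T view of v (topology, vertex identifiers = names, and input labels).\<close>
definition local_alg :: "nat \<Rightarrow> nat \<Rightarrow> (nat set \<Rightarrow> (nat \<Rightarrow> nat \<Rightarrow> bool) \<Rightarrow> (nat \<times> nat \<Rightarrow> 'a)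
    \<Rightarrow> nat \<times> nat \<Rightarrow> 'b) \<Rightarrow> bool" where
  "local_alg \<Delta> T A \<longleftrightarrow> (\<forall>V E l V' E' l' v.
     bd_tree \<Delta> V E \<and> bd_tree \<Delta> V' E' \<and> v \<in> V \<and> v \<in> V' \<and> same_view T V E l V' E' l' v
     \<longrightarrow> (\<forall>u. E v u \<longrightarrow> A V E l (v, u) = A V' E' l' (v, u)))"

definition inputs_in :: "'i set \<Rightarrow> (nat \<Rightarrow> nat \<Rightarrow> bool) \<Rightarrow> (nat \<times> nat \<Rightarrow> 'i) \<Rightarrow> bool" where
  "inputs_in Sin E i \<longleftrightarrow> (\<forall>x y. E x y \<longrightarrow> i (x, y) \<in> Sin)"

end

theory Submission
  imports Defs
begin

text \<open>Label the half-edge (v, u) with its port number at v (the rank of u among the neighbours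
  of v), its output, and the radius-r port view of v: for every non-backtracking word of at most
  r ports, the inputs, outputs and reverse ports around the node it leads to. A node constraint
  admits exactly the label multisets found around a node of a correctly solved tree of maximum
  degree \<Delta>, an edge constraint those found on an edge of such a tree. There are finitely many
  labels, and labelling takes r + 2 rounds, decoding the output 1 round.

  In a tree, the non-backtracking port words from v correspond bijectively to the ball around v,
  so equal port views give isomorphic labelled balls. The edge constraints force the views
  claimed at adjacent nodes to be shifts of each other by one port; hence the view claimed at v
  is the true port view of v under the decoded ports and outputs, and the ball around v is
  isomorphic to the correctly solved ball witnessing its node constraint.\<close>

section \<open>Non-backtracking walks in forests\<close>

fun no_backtrack :: "'a list \<Rightarrow> bool" where
  "no_backtrack (a # b # c # zs) \<longleftrightarrow> a \<noteq> c \<and> no_backtrack (b # c # zs)"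
| "no_backtrack _ \<longleftrightarrow> True"

lemma no_backtrack_append:
  "no_backtrack (xs @ [a, b] @ ys) \<longleftrightarrow> no_backtrack (xs @ [a, b]) \<and> no_backtrack (a # b # ys)"
proof (induction xs)
  case Nil
  then show ?case by simp
next
  case (Cons x xs)
  show ?case
  proof (cases xs)
    case Nil
    then show ?thesis by (cases ys) auto
  next
    case (Cons y zs)
    then show ?thesis using Cons.IH by (cases zs) auto
  qed
qed

lemma no_backtrack_if_distinct: "distinct xs \<Longrightarrow> no_backtrack xs"
  by (induction xs rule: no_backtrack.induct) auto

lemma no_backtrack_ConsD: "no_backtrack (a # xs) \<Longrightarrow> no_backtrack xs"
  by (cases xs rule: no_backtrack.cases) auto

lemma cycle_if_not_distinct:
  assumes irrefl: "\<forall>x. \<not> E x x"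
  shows "successively E xs \<Longrightarrow> no_backtrack xs \<Longrightarrow> \<not> distinct xs \<Longrightarrow> \<exists>c. is_cycle E c"
proof (induction xs)
  case (Cons x xs)
  show ?case
  proof (cases "distinct xs")
    case False
    then show ?thesis
      using Cons by (auto simp: successively_Cons dest: no_backtrack_ConsD)
  next
    case True
    with Cons.prems have "x \<in> set xs" by auto
    then obtain ys zs where xs: "xs = ys @ x # zs" and "x \<notin> set ys"
      using split_list_first by metis
    define c where "c = x # ys"
    have "successively E ((c @ [x]) @ zs)"
      using Cons.prems(1) xs by (simp add: c_def)
    then have closed: "successively E (c @ [x])"
      by (simp only: successively_append_iff)
    have "ys \<noteq> []" using closed irrefl by (auto simp: c_def)
    then obtain y ys' where ys: "ys = y # ys'" by (cases ys) auto
    have "ys' \<noteq> []"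
      using Cons.prems(2) xs ys by (cases zs) auto
    have "is_cycle E c" unfolding is_cycle_def
    proof (intro conjI allI impI)
      show "3 \<le> length c" using \<open>ys' \<noteq> []\<close> ys c_def by (cases ys') auto
      show "distinct c" using c_def \<open>x \<notin> set ys\<close> True xs by simp
      fix k assume "Suc k < length c"
      then show "E (c ! k) (c ! Suc k)"
        using successively_nth[OF closed, of k] by (simp add: nth_append)
    next
      show "E (last c) (hd c)"
        using closed unfolding successively_append_iff by (simp add: c_def)
    qed
    then show ?thesis by blast
  qed
qed simp

definition forest :: "(nat \<Rightarrow> nat \<Rightarrow> bool) \<Rightarrow> bool" where
  "forest E \<longleftrightarrow> (\<forall>x. \<not> E x x) \<and> symp E \<and> (\<nexists>c. is_cycle E c)"

lemma forest_if_bd_tree: "bd_tree \<Delta> V E \<Longrightarrow> forest E"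
  unfolding bd_tree_def is_tree_def simple_graph_def forest_def symp_def by blast

lemma simple_graph_if_bd_tree: "bd_tree \<Delta> V E \<Longrightarrow> simple_graph V E"
  unfolding bd_tree_def is_tree_def by blast

lemma distinct_if_no_backtrack:
  "forest E \<Longrightarrow> successively E xs \<Longrightarrow> no_backtrack xs \<Longrightarrow> distinct xs"
  using cycle_if_not_distinct unfolding forest_def by blast

text \<open>Two paths with common endpoints either share their second vertex, or they glue to a
  closed non-backtracking walk.\<close>
lemma forest_path_unique:
  assumes forest: "forest E"
  shows "successively E xs \<Longrightarrow> distinct xs \<Longrightarrow> successively E ys \<Longrightarrow> distinct ys
    \<Longrightarrow> xs \<noteq> [] \<Longrightarrow> ys \<noteq> [] \<Longrightarrow> hd xs = hd ys \<Longrightarrow> last xs = last ys \<Longrightarrow> xs = ys"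
proof (induction xs arbitrary: ys)
  case (Cons v xs)
  obtain ys' where ys: "ys = v # ys'" using Cons.prems by (cases ys) auto
  show ?case
  proof (cases xs)
    case Nil
    then show ?thesis using Cons.prems ys by (cases ys' rule: rev_cases) auto
  next
    case (Cons a xs')
    have "ys' \<noteq> []"
      using Cons.prems ys Cons by (cases xs' rule: rev_cases) auto
    then obtain b ys'' where ys': "ys' = b # ys''" by (cases ys') auto
    show ?thesis
    proof (cases "a = b")
      case True
      then have "xs = ys'"
        using Cons.IH[of ys'] Cons.prems ys ys' Cons by (auto simp: successively_Cons)
      then show ?thesis using ys by simp
    next
      case False
      define W where "W = rev xs' @ [a, v] @ b # ys''"
      have W_glue: "W = rev (v # xs) @ ys'" by (simp add: W_def Cons ys')
      have "symp E" using forest by (simp add: forest_def)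
      have "successively (\<lambda>x y. E y x) (v # xs)"
        by (rule successively_mono[OF Cons.prems(1)]) (use \<open>symp E\<close> in \<open>erule sympD\<close>)
      then have "successively E (rev (v # xs))" by (simp only: successively_rev)
      then have "successively E W"
        using Cons.prems(3) ys ys' unfolding W_glue successively_append_iff by simp
      moreover have "no_backtrack W"
        using no_backtrack_if_distinct[of "rev (v # xs)"] no_backtrack_if_distinct[of "v # ys'"]
          Cons.prems ys ys' Cons False
        unfolding W_def no_backtrack_append by simp
      moreover have "\<not> distinct W"
      proof -
        have "last (v # xs) \<in> set (rev xs' @ [a])" using Cons by simp
        moreover have "last (v # xs) \<in> set (b # ys'')" using Cons.prems ys ys' by simp
        ultimately show ?thesis by (auto simp: W_def)
      qed
      ultimately show ?thesis using distinct_if_no_backtrack[OF forest] by blast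
    qed
  qed
qed simp

section \<open>Following port numbers\<close>

definition port_numbering :: "(nat \<Rightarrow> nat \<Rightarrow> bool) \<Rightarrow> (nat \<times> nat \<Rightarrow> nat) \<Rightarrow> bool" where
  "port_numbering E p \<longleftrightarrow> (\<forall>x. inj_on (\<lambda>y. p (x, y)) {y. E x y})"

definition port_nbr :: "(nat \<Rightarrow> nat \<Rightarrow> bool) \<Rightarrow> (nat \<times> nat \<Rightarrow> nat) \<Rightarrow> nat \<Rightarrow> nat \<Rightarrow> nat option" where
  "port_nbr E p x q =
     (if \<exists>y. E x y \<and> p (x, y) = q then Some (SOME y. E x y \<and> p (x, y) = q) else None)"

fun follow :: "(nat \<Rightarrow> nat \<Rightarrow> bool) \<Rightarrow> (nat \<times> nat \<Rightarrow> nat) \<Rightarrow> nat \<Rightarrow> nat list \<Rightarrow> nat option" where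
  "follow E p x [] = Some x"
| "follow E p x (q # w) = (case port_nbr E p x q of None \<Rightarrow> None | Some y \<Rightarrow> follow E p y w)"

fun nonbacktracking :: "(nat \<Rightarrow> nat \<Rightarrow> bool) \<Rightarrow> (nat \<times> nat \<Rightarrow> nat) \<Rightarrow> nat \<Rightarrow> nat list \<Rightarrow> bool" where
  "nonbacktracking E p x [] \<longleftrightarrow> True"
| "nonbacktracking E p x (q # w) \<longleftrightarrow> (case port_nbr E p x q of None \<Rightarrow> False | Some y \<Rightarrow>
      (case w of [] \<Rightarrow> True | q' # _ \<Rightarrow> q' \<noteq> p (y, x)) \<and> nonbacktracking E p y w)"

fun visited :: "(nat \<Rightarrow> nat \<Rightarrow> bool) \<Rightarrow> (nat \<times> nat \<Rightarrow> nat) \<Rightarrow> nat \<Rightarrow> nat list \<Rightarrow> nat list" where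
  "visited E p x [] = [x]"
| "visited E p x (q # w) = x # (case port_nbr E p x q of None \<Rightarrow> [] | Some y \<Rightarrow> visited E p y w)"

fun port_word :: "(nat \<times> nat \<Rightarrow> nat) \<Rightarrow> nat list \<Rightarrow> nat list" where
  "port_word p (a # b # zs) = p (a, b) # port_word p (b # zs)"
| "port_word p _ = []"

lemma port_nbr_SomeD:
  assumes "port_nbr E p x q = Some y"
  shows "E x y \<and> p (x, y) = q"
proof -
  have ex: "\<exists>y. E x y \<and> p (x, y) = q" using assms unfolding port_nbr_def by (auto split: if_splits)
  then have "y = (SOME y. E x y \<and> p (x, y) = q)" using assms unfolding port_nbr_def by simp
  then show ?thesis using someI_ex[OF ex] by simp
qed

lemma port_nbr_Some_iff:
  assumes "port_numbering E p"
  shows "port_nbr E p x q = Some y \<longleftrightarrow> E x y \<and> p (x, y) = q"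
proof
  assume "E x y \<and> p (x, y) = q"
  moreover from this have "E x (SOME y. E x y \<and> p (x, y) = q) \<and> p (x, SOME y. E x y \<and> p (x, y) = q) = q"
    by (rule someI)
  ultimately show "port_nbr E p x q = Some y"
    using assms unfolding port_nbr_def port_numbering_def inj_on_def by auto
qed (rule port_nbr_SomeD)

lemma port_nbr_None_iff: "port_nbr E p x q = None \<longleftrightarrow> (\<forall>y. E x y \<longrightarrow> p (x, y) \<noteq> q)"
  unfolding port_nbr_def by auto

lemma follow_append:
  "follow E p x (w @ w') = (case follow E p x w of None \<Rightarrow> None | Some z \<Rightarrow> follow E p z w')"
  by (induction w arbitrary: x) (auto split: option.splits)

lemma follow_Some_if_nonbacktracking:
  "nonbacktracking E p x w \<Longrightarrow> follow E p x w = Some (the (follow E p x w))"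
  by (induction w arbitrary: x) (auto split: option.splits)

lemma nonbacktracking_appendD: "nonbacktracking E p x (w @ w') \<Longrightarrow> nonbacktracking E p x w"
proof (induction w arbitrary: x)
  case (Cons q w)
  show ?case
  proof (cases "port_nbr E p x q")
    case (Some y)
    then have "nonbacktracking E p y w" using Cons by simp
    then show ?thesis using Some Cons.prems by (cases w) auto
  qed (use Cons.prems in simp)
qed simp

lemma nonbacktracking_snoc_snoc:
  "nonbacktracking E p x (w @ [q', q]) \<longleftrightarrow> nonbacktracking E p x (w @ [q']) \<and>
     (\<exists>z y. follow E p x w = Some z \<and> port_nbr E p z q' = Some y \<and> port_nbr E p y q \<noteq> None
        \<and> q \<noteq> p (y, z))"
proof (induction w arbitrary: x)
  case (Cons a w)
  show ?case
    using Cons.IH by (cases "port_nbr E p x a"; cases w) (auto split: option.splits)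
qed (auto split: option.splits)

lemma visited_walk:
  "follow E p x w = Some z \<Longrightarrow>
     visited E p x w \<noteq> [] \<and> hd (visited E p x w) = x \<and> last (visited E p x w) = z
     \<and> successively E (visited E p x w) \<and> port_word p (visited E p x w) = w
     \<and> (nonbacktracking E p x w \<longrightarrow> no_backtrack (visited E p x w))"
proof (induction w arbitrary: x)
  case (Cons q w)
  then obtain y where y: "port_nbr E p x q = Some y" and wy: "follow E p y w = Some z"
    by (auto split: option.splits)
  note IH = Cons.IH[OF wy]
  obtain t where t: "visited E p y w = y # t" using IH by (cases "visited E p y w") auto
  have "no_backtrack (visited E p x (q # w))" if nb: "nonbacktracking E p x (q # w)"
  proof (cases w)
    case (Cons q' w')
    obtain u where u: "port_nbr E p y q' = Some u" using nb y Cons by (auto split: option.splits)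
    have "u \<noteq> x" using nb y Cons port_nbr_SomeD[OF u] by auto
    obtain s where s: "visited E p u w' = u # s" by (cases w') auto
    have "no_backtrack (y # t)" using IH nb y t by simp
    have "t = u # s" using t s Cons u by simp
    then show ?thesis using \<open>u \<noteq> x\<close> \<open>no_backtrack (y # t)\<close> y t by simp
  qed (use y in simp)
  then show ?case using IH y port_nbr_SomeD[OF y] t by simp
qed simp

text \<open>In a forest, the walks along two non-backtracking port words are paths, so words ending
  at the same vertex coincide.\<close>
lemma follow_inj:
  assumes "forest E" and "nonbacktracking E p x w1" and "nonbacktracking E p x w2"
    and "follow E p x w1 = Some z" and "follow E p x w2 = Some z"
  shows "w1 = w2"
proof -
  have "visited E p x w1 = visited E p x w2"
    using forest_path_unique[OF \<open>forest E\<close>] distinct_if_no_backtrack[OF \<open>forest E\<close>]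
      visited_walk[OF assms(4)] visited_walk[OF assms(5)] assms(2,3)
    by metis
  then show ?thesis using visited_walk[OF assms(4)] visited_walk[OF assms(5)] by metis
qed

lemma follow_relpowp:
  assumes "simple_graph V E"
  shows "x \<in> V \<Longrightarrow> follow E p x w = Some z \<Longrightarrow> (adj V E ^^ length w) x z"
proof (induction w arbitrary: x)
  case (Cons q w)
  then obtain y where y: "port_nbr E p x q = Some y" and wy: "follow E p y w = Some z"
    by (auto split: option.splits)
  have "y \<in> V" "adj V E x y"
    using port_nbr_SomeD[OF y] assms Cons.prems unfolding simple_graph_def adj_def by auto
  moreover from \<open>y \<in> V\<close> have "(adj V E ^^ length w) y z" by (rule Cons.IH[OF _ wy])
  ultimately show ?case using relpowp_Suc_I2[of "adj V E" x y "length w" z] by simp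
qed simp

text \<open>Extend a word reaching y by the port towards x, dropping its last step instead if that
  step came from x.\<close>
lemma nonbacktracking_if_relpowp:
  assumes "simple_graph V E" and p: "port_numbering E p"
  shows "(adj V E ^^ k) v x \<Longrightarrow> \<exists>w. nonbacktracking E p v w \<and> length w \<le> k \<and> follow E p v w = Some x"
proof (induction k arbitrary: x)
  case 0
  then show ?case by (intro exI[of _ "[]"]) simp
next
  case (Suc k)
  then obtain y where "(adj V E ^^ k) v y" and "adj V E y x" by (auto elim: relpowp_Suc_E)
  with Suc.IH obtain w where w: "nonbacktracking E p v w" "length w \<le> k" "follow E p v w = Some y"
    by blast
  have "E y x" using \<open>adj V E y x\<close> adj_def by blast
  then have yx: "port_nbr E p y (p (y, x)) = Some x" using port_nbr_Some_iff[OF p] by blast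
  show ?case
  proof (cases w rule: rev_cases)
    case Nil
    then show ?thesis using w yx by (intro exI[of _ "[p (y, x)]"]) auto
  next
    case (snoc w0 q0)
    then obtain z where z: "follow E p v w0 = Some z" and zy: "port_nbr E p z q0 = Some y"
      using w(3) by (auto simp: follow_append split: option.splits)
    show ?thesis
    proof (cases "x = z")
      case True
      then show ?thesis using nonbacktracking_appendD[of E p v w0 "[q0]"] w snoc z
        by (intro exI[of _ w0]) auto
    next
      case False
      have "E y z" using port_nbr_SomeD[OF zy] assms unfolding simple_graph_def by blast
      then have "p (y, x) \<noteq> p (y, z)"
        using p \<open>E y x\<close> False unfolding port_numbering_def inj_on_def by blast
      then have "nonbacktracking E p v (w0 @ [q0, p (y, x)])"
        using nonbacktracking_snoc_snoc w snoc z zy yx by fastforce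
      moreover have "follow E p v (w0 @ [q0, p (y, x)]) = Some x"
        using z zy yx by (simp add: follow_append)
      ultimately show ?thesis using w snoc by (intro exI[of _ "w0 @ [q0, p (y, x)]"]) auto
    qed
  qed
qed

definition nonbacktracking_words ::
    "(nat \<Rightarrow> nat \<Rightarrow> bool) \<Rightarrow> (nat \<times> nat \<Rightarrow> nat) \<Rightarrow> nat \<Rightarrow> nat \<Rightarrow> nat list set" where
  "nonbacktracking_words E p r v = {w. length w \<le> r \<and> nonbacktracking E p v w}"

lemma bij_betw_follow_ball:
  assumes "simple_graph V E" and "forest E" and "port_numbering E p" and "v \<in> V"
  shows "bij_betw (\<lambda>w. the (follow E p v w)) (nonbacktracking_words E p r v) (ball V E r v)"
  unfolding bij_betw_def
proof (intro conjI inj_onI subset_antisym subsetI)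
  fix w1 w2
  assume "w1 \<in> nonbacktracking_words E p r v" "w2 \<in> nonbacktracking_words E p r v"
    and "the (follow E p v w1) = the (follow E p v w2)"
  then show "w1 = w2"
    using follow_inj[OF assms(2)] follow_Some_if_nonbacktracking
    unfolding nonbacktracking_words_def by (metis mem_Collect_eq)
next
  fix x assume "x \<in> (\<lambda>w. the (follow E p v w)) ` nonbacktracking_words E p r v"
  then obtain w where "length w \<le> r" "nonbacktracking E p v w" "x = the (follow E p v w)"
    unfolding nonbacktracking_words_def by blast
  then have "follow E p v w = Some x" using follow_Some_if_nonbacktracking by metis
  then have "(adj V E ^^ length w) v x" by (rule follow_relpowp[OF assms(1,4)])
  then show "x \<in> ball V E r v" using \<open>length w \<le> r\<close> unfolding ball_def by blast
next
  fix x assume "x \<in> ball V E r v"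
  then obtain k where "k \<le> r" "(adj V E ^^ k) v x" unfolding ball_def by blast
  then obtain w where "nonbacktracking E p v w" "length w \<le> k" "follow E p v w = Some x"
    using nonbacktracking_if_relpowp[OF assms(1,3)] by blast
  then show "x \<in> (\<lambda>w. the (follow E p v w)) ` nonbacktracking_words E p r v"
    using \<open>k \<le> r\<close> unfolding nonbacktracking_words_def by (intro image_eqI[of _ _ w]) auto
qed

text \<open>The endpoints of an edge are reached by words differing in one last step, since
  otherwise the two walks and the edge would close a cycle.\<close>
lemma follow_adjacent:
  assumes "simple_graph V E" and "forest E" and p: "port_numbering E p"
    and nb1: "nonbacktracking E p v w1" and nb2: "nonbacktracking E p v w2"
    and x: "follow E p v w1 = Some x" and y: "follow E p v w2 = Some y" and "E x y"
  shows "w2 = w1 @ [p (x, y)] \<or> w1 = w2 @ [p (y, x)]"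
proof -
  have xy: "port_nbr E p x (p (x, y)) = Some y" using port_nbr_Some_iff[OF p] \<open>E x y\<close> by blast
  show ?thesis
  proof (cases "nonbacktracking E p v (w1 @ [p (x, y)])")
    case True
    have "follow E p v (w1 @ [p (x, y)]) = Some y" using x xy by (simp add: follow_append)
    then show ?thesis using follow_inj[OF assms(2) True nb2 _ y] by simp
  next
    case False
    show ?thesis
    proof (cases w1 rule: rev_cases)
      case Nil
      then show ?thesis using False xy x by simp
    next
      case (snoc w0 q0)
      then obtain z where z: "follow E p v w0 = Some z" and zx: "port_nbr E p z q0 = Some x"
        using x by (auto simp: follow_append split: option.splits)
      have "p (x, y) = p (x, z)"
        using False nonbacktracking_snoc_snoc[of E p v w0 q0 "p (x, y)"] snoc nb1 z zx xy by auto
      moreover have "E x z" using port_nbr_SomeD[OF zx] assms(1) unfolding simple_graph_def by blast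
      ultimately have "y = z" using p \<open>E x y\<close> unfolding port_numbering_def inj_on_def by blast
      have "nonbacktracking E p v w0" using nonbacktracking_appendD nb1 snoc by blast
      then have "w0 = w2" using follow_inj[OF assms(2) _ nb2] z y \<open>y = z\<close> by simp
      moreover have "q0 = p (y, x)" using port_nbr_SomeD[OF zx] \<open>y = z\<close> by simp
      ultimately show ?thesis using snoc by simp
    qed
  qed
qed

section \<open>Port views\<close>

definition local_view :: "(nat \<Rightarrow> nat \<Rightarrow> bool) \<Rightarrow> (nat \<times> nat \<Rightarrow> 'i) \<Rightarrow> (nat \<times> nat \<Rightarrow> 'o)
    \<Rightarrow> (nat \<times> nat \<Rightarrow> nat) \<Rightarrow> nat \<Rightarrow> nat \<Rightarrow> ('i \<times> 'o \<times> nat) option" where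
  "local_view E i out p x = (\<lambda>q. map_option (\<lambda>y. (i (x, y), out (x, y), p (y, x))) (port_nbr E p x q))"

type_synonym ('i, 'o) view = "nat list \<Rightarrow> (nat \<Rightarrow> ('i \<times> 'o \<times> nat) option) option"

definition port_view :: "(nat \<Rightarrow> nat \<Rightarrow> bool) \<Rightarrow> (nat \<times> nat \<Rightarrow> 'i) \<Rightarrow> (nat \<times> nat \<Rightarrow> 'o)
    \<Rightarrow> (nat \<times> nat \<Rightarrow> nat) \<Rightarrow> nat \<Rightarrow> nat \<Rightarrow> ('i, 'o) view" where
  "port_view E i out p k x =
     (\<lambda>w. if length w \<le> k then map_option (local_view E i out p) (follow E p x w) else None)"

lemma local_view_Some:
  "port_nbr E p x q = Some y \<Longrightarrow> local_view E i out p x q = Some (i (x, y), out (x, y), p (y, x))"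
  unfolding local_view_def by simp

lemma local_view_None_iff: "local_view E i out p x q = None \<longleftrightarrow> port_nbr E p x q = None"
  unfolding local_view_def by simp

lemma port_view_Nil: "port_view E i out p k x [] = Some (local_view E i out p x)"
  unfolding port_view_def by simp

lemma port_view_Cons: "port_view E i out p k x (q # w) = (if k = 0 then None else
    (case port_nbr E p x q of None \<Rightarrow> None | Some y \<Rightarrow> port_view E i out p (k - 1) y w))"
  unfolding port_view_def by (auto split: option.splits)

lemma port_view_cong_radius:
  "length w \<le> k \<Longrightarrow> length w \<le> k' \<Longrightarrow> port_view E i out p k x w = port_view E i out p k' x w"
  unfolding port_view_def by simp

lemma port_view_eq_None:
  assumes "port_view E i out p k x = port_view E' i' out' p' k x'" and "port_nbr E p x q = None"
  shows "port_nbr E' p' x' q = None"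
  using fun_cong[OF assms(1), of "[]"] assms(2)
    by (metis local_view_None_iff port_view_Nil option.inject)

lemma port_view_eq_Some:
  assumes eq: "port_view E i out p k x = port_view E' i' out' p' k x'"
    and y: "port_nbr E p x q = Some y"
  obtains y' where "port_nbr E' p' x' q = Some y'"
    and "i (x, y) = i' (x', y')" "out (x, y) = out' (x', y')" "p (y, x) = p' (y', x')"
    and "0 < k \<Longrightarrow> port_view E i out p (k - 1) y = port_view E' i' out' p' (k - 1) y'"
proof -
  have loc: "local_view E i out p x = local_view E' i' out' p' x'"
    using fun_cong[OF eq, of "[]"] by (simp add: port_view_Nil)
  then obtain y' where y': "port_nbr E' p' x' q = Some y'"
    using local_view_Some[OF y, of i out] local_view_None_iff by (metis not_Some_eq)
  have "port_view E i out p (k - 1) y w = port_view E' i' out' p' (k - 1) y' w" if "0 < k" for w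
    using fun_cong[OF eq, of "q # w"] that y y' by (simp add: port_view_Cons)
  then show ?thesis
    using that y' loc local_view_Some[OF y, of i out] local_view_Some[OF y', of i' out'] by auto
qed

lemma nonbacktracking_eq_if_port_view_eq:
  "port_view E i out p k x = port_view E' i' out' p' k x' \<Longrightarrow> length w \<le> k
    \<Longrightarrow> nonbacktracking E p x w = nonbacktracking E' p' x' w"
proof (induction w arbitrary: x x' k)
  case (Cons q w)
  show ?case
  proof (cases "port_nbr E p x q")
    case None
    then show ?thesis using port_view_eq_None[OF Cons.prems(1)] by simp
  next
    case (Some y)
    obtain y' where y': "port_nbr E' p' x' q = Some y'" "p (y, x) = p' (y', x')"
      "0 < k \<Longrightarrow> port_view E i out p (k - 1) y = port_view E' i' out' p' (k - 1) y'"
      using port_view_eq_Some[OF Cons.prems(1) Some] by metis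
    have "nonbacktracking E p y w = nonbacktracking E' p' y' w"
      using Cons.IH[OF y'(3)] Cons.prems(2) by simp
    then show ?thesis using Some y' by (cases w) auto
  qed
qed simp

lemma follow_if_port_view_eq:
  assumes "port_view E i out p k x = port_view E' i' out' p' k x'" and "length w \<le> k"
    and "follow E p x w = Some z"
  obtains z' where "follow E' p' x' w = Some z'"
    and "local_view E i out p z = local_view E' i' out' p' z'"
  using fun_cong[OF assms(1), of w] assms(2,3) unfolding port_view_def
  by (cases "follow E' p' x' w") auto

lemma edge_if_port_view_eq:
  assumes sg: "simple_graph V E" and "forest E" and p: "port_numbering E p"
    and p': "port_numbering E' p'" and sg': "simple_graph V' E'"
    and eq: "port_view E i out p r v = port_view E' i' out' p' r v'"
    and w1: "w1 \<in> nonbacktracking_words E p r v" and w2: "w2 \<in> nonbacktracking_words E p r v"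
    and x: "follow E p v w1 = Some x" and y: "follow E p v w2 = Some y" and "E x y"
  obtains x' y' where "follow E' p' v' w1 = Some x'" and "follow E' p' v' w2 = Some y'"
    and "E' x' y'" and "i (x, y) = i' (x', y')" and "out (x, y) = out' (x', y')"
proof -
  have l1: "length w1 \<le> r" "nonbacktracking E p v w1" and l2: "length w2 \<le> r" "nonbacktracking E p v w2"
    using w1 w2 unfolding nonbacktracking_words_def by auto
  obtain x' where x': "follow E' p' v' w1 = Some x'"
    "local_view E i out p x = local_view E' i' out' p' x'"
    using follow_if_port_view_eq[OF eq l1(1) x] by blast
  obtain y' where y': "follow E' p' v' w2 = Some y'"
    "local_view E i out p y = local_view E' i' out' p' y'"
    using follow_if_port_view_eq[OF eq l2(1) y] by blast
  have xy: "port_nbr E p x (p (x, y)) = Some y" using port_nbr_Some_iff[OF p] \<open>E x y\<close> by blast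
  have "E y x" using \<open>E x y\<close> sg unfolding simple_graph_def by blast
  then have yx: "port_nbr E p y (p (y, x)) = Some x" using port_nbr_Some_iff[OF p] by blast
  have x'y': "port_nbr E' p' x' (p (x, y)) = Some y'"
    using follow_adjacent[OF sg \<open>forest E\<close> p l1(2) l2(2) x y \<open>E x y\<close>]
  proof
    assume w2_eq: "w2 = w1 @ [p (x, y)]"
    obtain y'' where y'': "port_nbr E' p' x' (p (x, y)) = Some y''"
      using x'(2) local_view_Some[OF xy, of i out] local_view_None_iff by (metis not_Some_eq)
    then have "follow E' p' v' w2 = Some y''" using w2_eq x'(1) by (simp add: follow_append)
    then show ?thesis using y'' y'(1) by simp
  next
    assume w1_eq: "w1 = w2 @ [p (y, x)]"
    obtain x'' where x'': "port_nbr E' p' y' (p (y, x)) = Some x''"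
      using y'(2) local_view_Some[OF yx, of i out] local_view_None_iff by (metis not_Some_eq)
    then have "follow E' p' v' w1 = Some x''" using w1_eq y'(1) by (simp add: follow_append)
    then have "x'' = x'" using x'(1) by simp
    have "p (x, y) = p' (x', y')"
      using y'(2) local_view_Some[OF yx, of i out] local_view_Some[OF x'', of i' out'] \<open>x'' = x'\<close>
      by simp
    moreover have "E' y' x'" using port_nbr_SomeD[OF x''] \<open>x'' = x'\<close> by simp
    ultimately show ?thesis using port_nbr_Some_iff[OF p'] sg' unfolding simple_graph_def by metis
  qed
  have "E' x' y'" using port_nbr_SomeD[OF x'y'] by simp
  moreover have "i (x, y) = i' (x', y') \<and> out (x, y) = out' (x', y')"
    using x'(2) local_view_Some[OF xy, of i out] local_view_Some[OF x'y', of i' out'] by simp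
  ultimately show ?thesis using that x'(1) y'(1) by blast
qed

lemma nonbacktracking_words_eq_if_port_view_eq:
  assumes "port_view E i out p r v = port_view E' i' out' p' r v'"
  shows "nonbacktracking_words E' p' r v' = nonbacktracking_words E p r v"
  unfolding nonbacktracking_words_def using nonbacktracking_eq_if_port_view_eq[OF assms] by auto

lemma edge_iff_if_port_view_eq:
  assumes sg: "simple_graph V E" and "forest E" and p: "port_numbering E p"
    and sg': "simple_graph V' E'" and "forest E'" and p': "port_numbering E' p'"
    and eq: "port_view E i out p r v = port_view E' i' out' p' r v'"
    and w1: "w1 \<in> nonbacktracking_words E p r v" and w2: "w2 \<in> nonbacktracking_words E p r v"
    and x: "follow E p v w1 = Some x" and y: "follow E p v w2 = Some y"
    and x': "follow E' p' v' w1 = Some x'" and y': "follow E' p' v' w2 = Some y'"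
  shows "(E x y \<longleftrightarrow> E' x' y') \<and> (E x y \<longrightarrow> i (x, y) = i' (x', y') \<and> out (x, y) = out' (x', y'))"
proof -
  note words = nonbacktracking_words_eq_if_port_view_eq[OF eq]
  have "E' x' y' \<and> i (x, y) = i' (x', y') \<and> out (x, y) = out' (x', y')" if "E x y"
    using edge_if_port_view_eq[OF sg \<open>forest E\<close> p p' sg' eq w1 w2 x y that] x' y' by auto
  moreover have "E x y" if "E' x' y'"
    using edge_if_port_view_eq[OF sg' \<open>forest E'\<close> p' p sg eq[symmetric] w1[folded words]
        w2[folded words] x' y' that] x y
    by auto
  ultimately show ?thesis by blast
qed

definition labelled_ball :: "nat set \<Rightarrow> (nat \<Rightarrow> nat \<Rightarrow> bool) \<Rightarrow> (nat \<times> nat \<Rightarrow> 'i) \<Rightarrow> (nat \<times> nat \<Rightarrow> 'o)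
    \<Rightarrow> nat \<Rightarrow> nat \<Rightarrow> ('i, 'o) cgraph" where
  "labelled_ball V E i out r v = \<lparr>cV = ball V E r v, cE = E, cin = i, cout = out, ctr = v\<rparr>"

lemma ball_iso_trans:
  assumes "ball_iso V E i out r v (labelled_ball V' E' i' out' r v')"
    and "ball_iso V' E' i' out' r v' H"
  shows "ball_iso V E i out r v H"
proof -
  obtain f where f: "bij_betw f (ball V E r v) (ball V' E' r v')" "f v = v'"
    "\<forall>x\<in>ball V E r v. \<forall>y\<in>ball V E r v. (E x y \<longleftrightarrow> E' (f x) (f y))
        \<and> (E x y \<longrightarrow> i (x, y) = i' (f x, f y) \<and> out (x, y) = out' (f x, f y))"
    using assms(1) unfolding ball_iso_def labelled_ball_def by auto
  obtain g where g: "bij_betw g (ball V' E' r v') (cV H)" "g v' = ctr H"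
    "\<forall>x\<in>ball V' E' r v'. \<forall>y\<in>ball V' E' r v'. (E' x y \<longleftrightarrow> cE H (g x) (g y))
        \<and> (E' x y \<longrightarrow> i' (x, y) = cin H (g x, g y) \<and> out' (x, y) = cout H (g x, g y))"
    using assms(2) unfolding ball_iso_def by blast
  have "f x \<in> ball V' E' r v'" if "x \<in> ball V E r v" for x using f(1) that bij_betwE by blast
  then have "\<forall>x\<in>ball V E r v. \<forall>y\<in>ball V E r v. (E x y \<longleftrightarrow> cE H ((g \<circ> f) x) ((g \<circ> f) y))
      \<and> (E x y \<longrightarrow> i (x, y) = cin H ((g \<circ> f) x, (g \<circ> f) y) \<and> out (x, y) = cout H ((g \<circ> f) x, (g \<circ> f) y))"
    using f(3) g(3) by simp
  moreover have "bij_betw (g \<circ> f) (ball V E r v) (cV H)" using bij_betw_trans[OF f(1) g(1)] .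
  ultimately show ?thesis unfolding ball_iso_def using f(2) g(2) by (intro exI[of _ "g \<circ> f"]) simp
qed

text \<open>Both balls are in bijection with the same set of non-backtracking port words.\<close>
lemma ball_iso_if_port_view_eq:
  assumes sg: "simple_graph V E" and "forest E" and p: "port_numbering E p" and v: "v \<in> V"
    and sg': "simple_graph V' E'" and "forest E'" and p': "port_numbering E' p'" and v': "v' \<in> V'"
    and eq: "port_view E i out p r v = port_view E' i' out' p' r v'"
  shows "ball_iso V E i out r v (labelled_ball V' E' i' out' r v')"
proof -
  define g where "g = (\<lambda>w. the (follow E p v w))"
  define g' where "g' = (\<lambda>w. the (follow E' p' v' w))"
  define N where "N = nonbacktracking_words E p r v"
  have N': "N = nonbacktracking_words E' p' r v'"
    unfolding N_def using nonbacktracking_words_eq_if_port_view_eq[OF eq] by simp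
  have follow: "follow E p v w = Some (g w)" if "w \<in> N" for w
    using that follow_Some_if_nonbacktracking unfolding g_def N_def nonbacktracking_words_def by blast
  have follow': "follow E' p' v' w = Some (g' w)" if "w \<in> N" for w
    using that follow_Some_if_nonbacktracking unfolding g'_def N' nonbacktracking_words_def by blast
  have bg: "bij_betw g N (ball V E r v)"
    unfolding g_def N_def by (rule bij_betw_follow_ball[OF sg \<open>forest E\<close> p v])
  have bg': "bij_betw g' N (ball V' E' r v')"
    unfolding g'_def N' by (rule bij_betw_follow_ball[OF sg' \<open>forest E'\<close> p' v'])
  define f where "f = g' \<circ> inv_into N g"
  have "bij_betw f (ball V E r v) (ball V' E' r v')"
    unfolding f_def by (rule bij_betw_trans[OF bij_betw_inv_into[OF bg] bg'])
  moreover have "[] \<in> N" "g [] = v" unfolding N_def nonbacktracking_words_def g_def by simp_all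
  then have "inv_into N g v = []" using bg unfolding bij_betw_def by (metis inv_into_f_f)
  then have "f v = v'" unfolding f_def g'_def by simp
  moreover have "(E x y \<longleftrightarrow> E' (f x) (f y))
      \<and> (E x y \<longrightarrow> i (x, y) = i' (f x, f y) \<and> out (x, y) = out' (f x, f y))"
    if "x \<in> ball V E r v" and "y \<in> ball V E r v" for x y
  proof -
    define w1 where "w1 = inv_into N g x"
    define w2 where "w2 = inv_into N g y"
    have "w1 \<in> N" "w2 \<in> N"
      unfolding w1_def w2_def using that bg by (auto simp: bij_betw_def intro: inv_into_into)
    moreover have "g w1 = x" "g w2 = y"
      unfolding w1_def w2_def using that bg by (auto simp: bij_betw_def f_inv_into_f)
    moreover have "f x = g' w1" "f y = g' w2" unfolding f_def w1_def w2_def by simp_all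
    ultimately show ?thesis
      using edge_iff_if_port_view_eq[OF sg \<open>forest E\<close> p sg' \<open>forest E'\<close> p' eq,
          of w1 w2 x y "f x" "f y"] follow follow'
      unfolding N_def by metis
  qed
  ultimately show ?thesis unfolding ball_iso_def labelled_ball_def by auto
qed

section \<open>Port numbers from identifiers\<close>

definition rank_port :: "(nat \<Rightarrow> nat \<Rightarrow> bool) \<Rightarrow> nat \<times> nat \<Rightarrow> nat" where
  "rank_port E h = card {z. E (fst h) z \<and> z < snd h}"

lemma finite_neighbours: "simple_graph V E \<Longrightarrow> finite {z. E x z}"
  unfolding simple_graph_def by (metis (no_types, lifting) mem_Collect_eq rev_finite_subset subsetI)

lemma port_numbering_rank_port:
  assumes "simple_graph V E"
  shows "port_numbering E (rank_port E)"
  unfolding port_numbering_def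
proof (intro allI inj_onI)
  fix x y1 y2 assume "y1 \<in> {y. E x y}" "y2 \<in> {y. E x y}" "rank_port E (x, y1) = rank_port E (x, y2)"
  have less: "rank_port E (x, a) < rank_port E (x, b)" if "E x a" "a < b" for a b
  proof -
    have "finite {z. E x z \<and> z < b}" using finite_neighbours[OF assms] by (rule rev_finite_subset) auto
    moreover have "{z. E x z \<and> z < a} \<subset> {z. E x z \<and> z < b}" using that by auto
    ultimately show ?thesis unfolding rank_port_def by (simp add: psubset_card_mono)
  qed
  show "y1 = y2"
  proof (rule ccontr)
    assume "y1 \<noteq> y2"
    then consider "y1 < y2" | "y2 < y1" by linarith
    then show False
      using less \<open>y1 \<in> _\<close> \<open>y2 \<in> _\<close> \<open>rank_port E _ = _\<close> by cases fastforce+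
  qed
qed

lemma rank_port_less_degree:
  assumes "bd_tree \<Delta> V E" and "E x y"
  shows "rank_port E (x, y) < \<Delta>"
proof -
  have sg: "simple_graph V E" using simple_graph_if_bd_tree[OF assms(1)] .
  then have "x \<in> V" using assms(2) unfolding simple_graph_def by blast
  then have "card {z. E x z} \<le> \<Delta>" using assms(1) unfolding bd_tree_def max_degree_le_def by blast
  moreover have "{z. E x z \<and> z < y} \<subset> {z. E x z}" using assms(2) by auto
  then have "card {z. E x z \<and> z < y} < card {z. E x z}"
    by (rule psubset_card_mono[OF finite_neighbours[OF sg]])
  ultimately show ?thesis unfolding rank_port_def by simp
qed

lemma follow_rank_port_bounded:
  assumes "bd_tree \<Delta> V E"
  shows "follow E (rank_port E) x w = Some z \<Longrightarrow> set w \<subseteq> {..<\<Delta>}"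
proof (induction w arbitrary: x)
  case (Cons q w)
  then obtain y where y: "port_nbr E (rank_port E) x q = Some y"
    and "follow E (rank_port E) y w = Some z"
    by (auto split: option.splits)
  from Cons.IH[OF this(2)] have "set w \<subseteq> {..<\<Delta>}" .
  moreover have "q < \<Delta>" using port_nbr_SomeD[OF y] rank_port_less_degree[OF assms] by blast
  ultimately show ?case by simp
qed simp

text \<open>Finite supersets of the local views, port views and labels that occur in trees of maximum
  degree \<Delta>; they make the output alphabet of the node-edge checkable problem finite.\<close>
definition local_view_space :: "nat \<Rightarrow> 'i set \<Rightarrow> 'o set \<Rightarrow> (nat \<Rightarrow> ('i \<times> 'o \<times> nat) option) set" where
  "local_view_space \<Delta> Sin Sout = {g. \<forall>q. (\<Delta> \<le> q \<longrightarrow> g q = None)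
     \<and> (\<forall>t. g q = Some t \<longrightarrow> t \<in> Sin \<times> Sout \<times> {..<\<Delta>})}"

definition port_view_space :: "nat \<Rightarrow> nat \<Rightarrow> 'i set \<Rightarrow> 'o set \<Rightarrow> ('i, 'o) view set" where
  "port_view_space \<Delta> r Sin Sout = {F. \<forall>w. (\<not> (set w \<subseteq> {..<\<Delta>} \<and> length w \<le> r) \<longrightarrow> F w = None)
     \<and> (\<forall>g. F w = Some g \<longrightarrow> g \<in> local_view_space \<Delta> Sin Sout)}"

type_synonym ('i, 'o) label = "nat \<times> 'o \<times> ('i, 'o) view"

definition label_space :: "nat \<Rightarrow> nat \<Rightarrow> 'i set \<Rightarrow> 'o set \<Rightarrow> ('i, 'o) label set" where
  "label_space \<Delta> r Sin Sout = {..<\<Delta>} \<times> Sout \<times> port_view_space \<Delta> r Sin Sout"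

lemma finite_local_view_space:
  assumes "finite Sin" and "finite Sout"
  shows "finite (local_view_space \<Delta> Sin Sout)"
proof (rule rev_finite_subset)
  show "finite {f. \<forall>x. (x \<in> {..<\<Delta>} \<longrightarrow> f x \<in> insert None (Some ` (Sin \<times> Sout \<times> {..<\<Delta>})))
      \<and> (x \<notin> {..<\<Delta>} \<longrightarrow> f x = None)}"
    by (rule finite_set_of_finite_funs) (use assms in simp_all)
  show "local_view_space \<Delta> Sin Sout \<subseteq> \<dots>"
  proof (intro subsetI CollectI allI conjI impI)
    fix g x assume "g \<in> local_view_space \<Delta> Sin Sout"
    then show "x \<in> {..<\<Delta>} \<Longrightarrow> g x \<in> insert None (Some ` (Sin \<times> Sout \<times> {..<\<Delta>}))"
      and "x \<notin> {..<\<Delta>} \<Longrightarrow> g x = None"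
      by (cases "g x"; auto simp: local_view_space_def)+
  qed
qed

lemma finite_port_view_space:
  assumes "finite Sin" and "finite Sout"
  shows "finite (port_view_space \<Delta> r Sin Sout)"
proof (rule rev_finite_subset)
  show "finite {f. \<forall>x. (x \<in> {w. set w \<subseteq> {..<\<Delta>} \<and> length w \<le> r}
        \<longrightarrow> f x \<in> insert None (Some ` local_view_space \<Delta> Sin Sout))
      \<and> (x \<notin> {w. set w \<subseteq> {..<\<Delta>} \<and> length w \<le> r} \<longrightarrow> f x = None)}"
    by (rule finite_set_of_finite_funs)
      (simp_all add: finite_lists_length_le finite_local_view_space[OF assms])
  show "port_view_space \<Delta> r Sin Sout \<subseteq> \<dots>"
  proof (intro subsetI CollectI allI conjI impI)
    fix F w assume "F \<in> port_view_space \<Delta> r Sin Sout"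
    then show "w \<in> {w. set w \<subseteq> {..<\<Delta>} \<and> length w \<le> r}
        \<Longrightarrow> F w \<in> insert None (Some ` local_view_space \<Delta> Sin Sout)"
      and "w \<notin> {w. set w \<subseteq> {..<\<Delta>} \<and> length w \<le> r} \<Longrightarrow> F w = None"
      by (cases "F w"; auto simp: port_view_space_def)+
  qed
qed

lemma finite_label_space: "finite Sin \<Longrightarrow> finite Sout \<Longrightarrow> finite (label_space \<Delta> r Sin Sout)"
  unfolding label_space_def by (simp add: finite_port_view_space)

definition labelled_tree :: "nat \<Rightarrow> 'i set \<Rightarrow> 'o set \<Rightarrow> nat set \<Rightarrow> (nat \<Rightarrow> nat \<Rightarrow> bool)
    \<Rightarrow> (nat \<times> nat \<Rightarrow> 'i) \<Rightarrow> (nat \<times> nat \<Rightarrow> 'o) \<Rightarrow> bool" where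
  "labelled_tree \<Delta> Sin Sout V E i out \<longleftrightarrow>
     bd_tree \<Delta> V E \<and> inputs_in Sin E i \<and> (\<forall>x y. E x y \<longrightarrow> out (x, y) \<in> Sout)"

definition half_edge_label :: "nat \<Rightarrow> (nat \<Rightarrow> nat \<Rightarrow> bool) \<Rightarrow> (nat \<times> nat \<Rightarrow> 'i) \<Rightarrow> (nat \<times> nat \<Rightarrow> 'o)
    \<Rightarrow> nat \<times> nat \<Rightarrow> ('i, 'o) label" where
  "half_edge_label r E i out h = (rank_port E h, out h, port_view E i out (rank_port E) r (fst h))"

lemma local_view_in_local_view_space:
  assumes tree: "labelled_tree \<Delta> Sin Sout V E i out"
  shows "local_view E i out (rank_port E) x \<in> local_view_space \<Delta> Sin Sout"
  unfolding local_view_space_def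
proof (intro CollectI allI conjI impI)
  have t: "bd_tree \<Delta> V E" using tree unfolding labelled_tree_def by blast
  fix q
  show "local_view E i out (rank_port E) x q = None" if "\<Delta> \<le> q"
  proof (cases "port_nbr E (rank_port E) x q")
    case (Some y)
    then show ?thesis
      using port_nbr_SomeD[OF Some] rank_port_less_degree[OF t] \<open>\<Delta> \<le> q\<close> by fastforce
  qed (simp add: local_view_None_iff)
  fix l assume lv: "local_view E i out (rank_port E) x q = Some l"
  then obtain y where y: "port_nbr E (rank_port E) x q = Some y"
    using local_view_None_iff by (metis not_Some_eq)
  then have "E x y" "E y x"
    using port_nbr_SomeD[OF y] simple_graph_if_bd_tree[OF t] unfolding simple_graph_def by blast+
  then show "l \<in> Sin \<times> Sout \<times> {..<\<Delta>}"
    using lv local_view_Some[OF y, of i out] tree rank_port_less_degree[OF t]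
    unfolding labelled_tree_def inputs_in_def by auto
qed

lemma port_view_in_port_view_space:
  assumes tree: "labelled_tree \<Delta> Sin Sout V E i out"
  shows "port_view E i out (rank_port E) r x \<in> port_view_space \<Delta> r Sin Sout"
  unfolding port_view_space_def
proof (intro CollectI allI conjI impI)
  have t: "bd_tree \<Delta> V E" using tree unfolding labelled_tree_def by blast
  fix w
  show "port_view E i out (rank_port E) r x w = None" if "\<not> (set w \<subseteq> {..<\<Delta>} \<and> length w \<le> r)"
    using that follow_rank_port_bounded[OF t] unfolding port_view_def
    by (cases "follow E (rank_port E) x w") auto
  fix g assume "port_view E i out (rank_port E) r x w = Some g"
  then show "g \<in> local_view_space \<Delta> Sin Sout"
    unfolding port_view_def using local_view_in_local_view_space[OF tree] by (auto split: if_splits)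
qed

lemma half_edge_label_in_label_space:
  assumes tree: "labelled_tree \<Delta> Sin Sout V E i out" and "E x y"
  shows "half_edge_label r E i out (x, y) \<in> label_space \<Delta> r Sin Sout"
proof -
  have "rank_port E (x, y) \<in> {..<\<Delta>}"
    using rank_port_less_degree \<open>E x y\<close> tree unfolding labelled_tree_def by blast
  moreover have "out (x, y) \<in> Sout" using tree \<open>E x y\<close> unfolding labelled_tree_def by blast
  ultimately show ?thesis
    unfolding label_space_def half_edge_label_def using port_view_in_port_view_space[OF tree] by simp
qed

section \<open>Locality of the labels\<close>

lemma center_in_ball: "v \<in> ball V E j v"
  unfolding ball_def by (intro CollectI exI[of _ 0]) simp

lemma ball_mono: "j \<le> j' \<Longrightarrow> ball V E j v \<subseteq> ball V E j' v"
  unfolding ball_def by (blast intro: le_trans)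

lemma ball_Suc_if_adjacent:
  assumes "simple_graph V E" and "x \<in> ball V E j v" and "E x z"
  shows "z \<in> ball V E (Suc j) v"
proof -
  obtain k where "k \<le> j" "(adj V E ^^ k) v x" using assms(2) unfolding ball_def by blast
  moreover have "adj V E x z" using assms(1,3) unfolding simple_graph_def adj_def by blast
  ultimately have "Suc k \<le> Suc j" "(adj V E ^^ Suc k) v z" by auto
  then show ?thesis unfolding ball_def by blast
qed

context
  fixes T V E V' E' and l l' :: "nat \<times> nat \<Rightarrow> 'i \<times> 'o" and v
  assumes sg: "simple_graph V E" and sg': "simple_graph V' E'"
    and view: "same_view T V E l V' E' l' v"
begin

lemma relpowp_adj_eq_if_same_view: "k \<le> T \<Longrightarrow> (adj V E ^^ k) v x = (adj V' E' ^^ k) v x"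
proof (induction k arbitrary: x)
  case (Suc k)
  have balls: "ball V E T v = ball V' E' T v"
    and edges: "\<forall>x\<in>ball V E T v. \<forall>y\<in>ball V E T v. E x y \<longleftrightarrow> E' x y"
    using view unfolding same_view_def by auto
  have in_ball: "y \<in> ball V E T v" "x \<in> ball V E T v"
    if "(adj V E ^^ k) v y" "adj V E y x" for V E x y
  proof -
    show "y \<in> ball V E T v"
      using that(1) Suc.prems unfolding ball_def by (intro CollectI exI[of _ k]) simp
    show "x \<in> ball V E T v"
      using relpowp_Suc_I[OF that] Suc.prems
        unfolding ball_def by (intro CollectI exI[of _ "Suc k"]) simp
  qed
  show ?case
  proof
    assume "(adj V E ^^ Suc k) v x"
    then obtain y where y: "(adj V E ^^ k) v y" "adj V E y x" by (auto elim: relpowp_Suc_E)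
    then have "E' y x" using edges in_ball[OF y] unfolding adj_def by blast
    then have "adj V' E' y x" using sg' unfolding simple_graph_def adj_def by blast
    then show "(adj V' E' ^^ Suc k) v x" using Suc y(1) by (auto intro: relpowp_Suc_I)
  next
    assume "(adj V' E' ^^ Suc k) v x"
    then obtain y where y: "(adj V' E' ^^ k) v y" "adj V' E' y x" by (auto elim: relpowp_Suc_E)
    then have "E y x" using edges in_ball[OF y] balls unfolding adj_def by blast
    then have "adj V E y x" using sg unfolding simple_graph_def adj_def by blast
    then show "(adj V E ^^ Suc k) v x" using Suc y(1) by (auto intro: relpowp_Suc_I)
  qed
qed simp

lemma ball_eq_if_same_view: "j \<le> T \<Longrightarrow> ball V E j v = ball V' E' j v"
  unfolding ball_def using relpowp_adj_eq_if_same_view by auto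

lemma edges_eq_if_same_view:
  assumes "x \<in> ball V E j v" and "j < T"
  shows "(E x z \<longleftrightarrow> E' x z) \<and> (E x z \<longrightarrow> l (x, z) = l' (x, z) \<and> l (z, x) = l' (z, x))"
proof -
  have agree: "(E x y \<longleftrightarrow> E' x y) \<and> (E x y \<longrightarrow> l (x, y) = l' (x, y))"
    if "x \<in> ball V E T v" "y \<in> ball V E T v" for x y
    using view that unfolding same_view_def by blast
  have xT: "x \<in> ball V E T v" using assms ball_mono[of j T] by auto
  have zT: "z \<in> ball V E T v" if "E x z \<or> E' x z"
  proof -
    have "x \<in> ball V' E' j v" using assms ball_eq_if_same_view[of j] by simp
    then have "z \<in> ball V E (Suc j) v \<or> z \<in> ball V' E' (Suc j) v"
      using that ball_Suc_if_adjacent[OF sg assms(1)] ball_Suc_if_adjacent[OF sg'] by blast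
    then show ?thesis
      using assms(2) ball_eq_if_same_view[of "Suc j"] ball_mono[of "Suc j" T V E v] by auto
  qed
  have "E z x" if "E x z" using that sg unfolding simple_graph_def by blast
  then show ?thesis using agree[OF xT zT] agree[OF zT xT] by blast
qed

lemma rank_port_eq_if_same_view:
  "x \<in> ball V E j v \<Longrightarrow> j < T \<Longrightarrow> rank_port E (x, y) = rank_port E' (x, y)"
  unfolding rank_port_def using edges_eq_if_same_view by simp

lemma port_nbr_eq_if_same_view:
  assumes "x \<in> ball V E j v" and "j < T"
  shows "port_nbr E (rank_port E) x q = port_nbr E' (rank_port E') x q"
proof -
  have "(E x y \<and> rank_port E (x, y) = q) \<longleftrightarrow> (E' x y \<and> rank_port E' (x, y) = q)" for y
    using edges_eq_if_same_view[OF assms, of y] rank_port_eq_if_same_view[OF assms, of y] by simp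
  then show ?thesis unfolding port_nbr_def by simp
qed

lemma local_view_eq_if_same_view:
  assumes "x \<in> ball V E j v" and "j + 2 \<le> T"
  shows "local_view E (fst \<circ> l) (snd \<circ> l) (rank_port E) x
    = local_view E' (fst \<circ> l') (snd \<circ> l') (rank_port E') x"
proof
  fix q
  have nbr: "port_nbr E (rank_port E) x q = port_nbr E' (rank_port E') x q"
    using port_nbr_eq_if_same_view[OF assms(1)] assms(2) by simp
  show "local_view E (fst \<circ> l) (snd \<circ> l) (rank_port E) x q
      = local_view E' (fst \<circ> l') (snd \<circ> l') (rank_port E') x q"
  proof (cases "port_nbr E (rank_port E) x q")
    case (Some y)
    then have "E x y" using port_nbr_SomeD by blast
    then have "y \<in> ball V E (Suc j) v" using ball_Suc_if_adjacent[OF sg assms(1)] by simp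
    then have "rank_port E (y, x) = rank_port E' (y, x)"
      using rank_port_eq_if_same_view assms(2) by simp
    moreover have "l (x, y) = l' (x, y)" using edges_eq_if_same_view[OF assms(1)] \<open>E x y\<close> assms(2)
      by simp
    ultimately show ?thesis using Some nbr by (simp add: local_view_def)
  qed (use nbr in \<open>simp add: local_view_def\<close>)
qed

lemma local_view_follow_eq_if_same_view:
  "x \<in> ball V E j v \<Longrightarrow> j + length w + 2 \<le> T \<Longrightarrow>
     map_option (local_view E (fst \<circ> l) (snd \<circ> l) (rank_port E)) (follow E (rank_port E) x w)
     = map_option (local_view E' (fst \<circ> l') (snd \<circ> l') (rank_port E')) (follow E' (rank_port E') x w)"
proof (induction w arbitrary: x j)
  case Nil
  then show ?case using local_view_eq_if_same_view[OF Nil.prems(1)] by (simp add: o_def)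
next
  case (Cons q w)
  have nbr: "port_nbr E (rank_port E) x q = port_nbr E' (rank_port E') x q"
    using port_nbr_eq_if_same_view[OF Cons.prems(1)] Cons.prems(2) by simp
  show ?case
  proof (cases "port_nbr E (rank_port E) x q")
    case (Some y)
    then have "y \<in> ball V E (Suc j) v"
      using port_nbr_SomeD ball_Suc_if_adjacent[OF sg Cons.prems(1)] by blast
    then show ?thesis using Cons.IH Cons.prems(2) Some nbr by simp
  qed (use nbr in simp)
qed

text \<open>The local views at distance r depend on the port numbers of nodes at distance r + 1,
  which depend on the identifiers at distance r + 2.\<close>
lemma half_edge_label_eq_if_same_view:
  assumes "r + 2 \<le> T" and "E v u"
  shows "half_edge_label r E (fst \<circ> l) (snd \<circ> l) (v, u)
    = half_edge_label r E' (fst \<circ> l') (snd \<circ> l') (v, u)"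
proof -
  have "port_view E (fst \<circ> l) (snd \<circ> l) (rank_port E) r v w
      = port_view E' (fst \<circ> l') (snd \<circ> l') (rank_port E') r v w" for w
    unfolding port_view_def using local_view_follow_eq_if_same_view[OF center_in_ball[of v V E 0]] assms
    by simp
  moreover have "rank_port E (v, u) = rank_port E' (v, u)"
    using rank_port_eq_if_same_view[OF center_in_ball[of v V E 0]] assms by simp
  moreover have "l (v, u) = l' (v, u)"
    using edges_eq_if_same_view[OF center_in_ball[of v V E 0]] assms by simp
  ultimately show ?thesis unfolding half_edge_label_def by (simp add: fun_eq_iff)
qed

end

section \<open>The node-edge checkable problem\<close>

definition node_constraints :: "nat \<Rightarrow> 'i set \<Rightarrow> 'o set \<Rightarrow> ('i, 'o) cgraph set \<Rightarrow> nat
    \<Rightarrow> (('i, 'o) label \<Rightarrow> nat)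
    \<Rightarrow> ('i \<times> nat) multiset set" where
  "node_constraints \<Delta> Sin Sout C r enc =
     {image_mset (\<lambda>u. (i (v, u), enc (half_edge_label r E i out (v, u)))) (mset_set {u. E v u})
       | V E i out v. labelled_tree \<Delta> Sin Sout V E i out \<and> v \<in> V \<and> (\<exists>H\<in>C. ball_iso V E i out r v H)}"

definition edge_constraints :: "nat \<Rightarrow> 'i set \<Rightarrow> 'o set \<Rightarrow> nat
    \<Rightarrow> (('i, 'o) label \<Rightarrow> nat)
    \<Rightarrow> ('i \<times> nat) multiset set" where
  "edge_constraints \<Delta> Sin Sout r enc =
     {{#(i (a, b), enc (half_edge_label r E i out (a, b))),
        (i (b, a), enc (half_edge_label r E i out (b, a)))#}
       | V E i out a b. labelled_tree \<Delta> Sin Sout V E i out \<and> E a b}"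

lemma finite_multisets_size_le:
  assumes "finite X"
  shows "finite {M. set_mset M \<subseteq> X \<and> size M \<le> n}"
proof -
  have "{M. set_mset M \<subseteq> X \<and> size M \<le> n} = (\<Union>k\<le>n. multisets_of_size X k)"
    unfolding multisets_of_size_def by auto
  then show ?thesis using assms by auto
qed

lemma encoded_half_edge_in_alphabet:
  assumes "labelled_tree \<Delta> Sin Sout V E i out" and "E a b"
  shows "(i (a, b), enc (half_edge_label r E i out (a, b))) \<in> Sin \<times> enc ` label_space \<Delta> r Sin Sout"
  using assms half_edge_label_in_label_space[OF assms] unfolding labelled_tree_def inputs_in_def by blast

lemma node_constraints_subset:
  "node_constraints \<Delta> Sin Sout C r enc
    \<subseteq> {M. set_mset M \<subseteq> Sin \<times> enc ` label_space \<Delta> r Sin Sout \<and> size M \<le> \<Delta>}"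
proof
  fix M
  assume "M \<in> node_constraints \<Delta> Sin Sout C r enc"
  then obtain V E i out v where tree: "labelled_tree \<Delta> Sin Sout V E i out" and "v \<in> V"
    and M: "M = image_mset (\<lambda>u. (i (v, u), enc (half_edge_label r E i out (v, u))))
          (mset_set {u. E v u})"
    unfolding node_constraints_def by blast
  then have "bd_tree \<Delta> V E" unfolding labelled_tree_def by blast
  then have "finite {u. E v u}" and "card {u. E v u} \<le> \<Delta>"
    using finite_neighbours simple_graph_if_bd_tree \<open>v \<in> V\<close>
    unfolding bd_tree_def max_degree_le_def by blast+
  then show "M \<in> {M. set_mset M \<subseteq> Sin \<times> enc ` label_space \<Delta> r Sin Sout \<and> size M \<le> \<Delta>}"
    using encoded_half_edge_in_alphabet[OF tree, where enc = enc and r = r] unfolding M by auto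
qed

lemma edge_constraints_subset:
  "edge_constraints \<Delta> Sin Sout r enc
    \<subseteq> {M. set_mset M \<subseteq> Sin \<times> enc ` label_space \<Delta> r Sin Sout \<and> size M \<le> 2}"
proof
  fix M
  assume "M \<in> edge_constraints \<Delta> Sin Sout r enc"
  then obtain V E i out a b where tree: "labelled_tree \<Delta> Sin Sout V E i out" and "E a b"
    and M: "M = {#(i (a, b), enc (half_edge_label r E i out (a, b))),
                  (i (b, a), enc (half_edge_label r E i out (b, a)))#}"
    unfolding edge_constraints_def by blast
  have "E b a"
    using tree \<open>E a b\<close> simple_graph_if_bd_tree unfolding labelled_tree_def simple_graph_def by blast
  then show "M \<in> {M. set_mset M \<subseteq> Sin \<times> enc ` label_space \<Delta> r Sin Sout \<and> size M \<le> 2}"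
    using encoded_half_edge_in_alphabet[OF tree, where enc = enc and r = r] \<open>E a b\<close>
    unfolding M by simp
qed

lemma is_necp_constraints:
  assumes "finite Sin" and "finite Sout"
  shows "is_necp Sin (enc ` label_space \<Delta> r Sin Sout)
    (node_constraints \<Delta> Sin Sout C r enc) (edge_constraints \<Delta> Sin Sout r enc)"
proof -
  have alphabet: "finite (Sin \<times> enc ` label_space \<Delta> r Sin Sout)" using assms finite_label_space by blast
  have "finite (node_constraints \<Delta> Sin Sout C r enc)"
    using finite_multisets_size_le[OF alphabet] node_constraints_subset by (rule rev_finite_subset)
  moreover have "finite (edge_constraints \<Delta> Sin Sout r enc)"
    using finite_multisets_size_le[OF alphabet] edge_constraints_subset by (rule rev_finite_subset)
  moreover have "finite (enc ` label_space \<Delta> r Sin Sout)" using assms finite_label_space by blast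
  ultimately show ?thesis
    unfolding is_necp_def using assms node_constraints_subset edge_constraints_subset by blast
qed

definition encode :: "nat \<Rightarrow> (('i, 'o) label \<Rightarrow> nat)
    \<Rightarrow> nat set \<Rightarrow> (nat \<Rightarrow> nat \<Rightarrow> bool) \<Rightarrow> (nat \<times> nat \<Rightarrow> 'i \<times> 'o) \<Rightarrow> nat \<times> nat \<Rightarrow> nat" where
  "encode r enc V E l h = enc (half_edge_label r E (fst \<circ> l) (snd \<circ> l) h)"

lemma local_alg_encode:
  fixes enc :: "('i, 'o) label \<Rightarrow> nat"
  shows "local_alg \<Delta> (r + 2) (encode r enc)"
  unfolding local_alg_def
proof (intro allI impI)
  fix V E V' E' v u and l l' :: "nat \<times> nat \<Rightarrow> 'i \<times> 'o"
  assume "bd_tree \<Delta> V E \<and> bd_tree \<Delta> V' E' \<and> v \<in> V \<and> v \<in> V' \<and> same_view (r + 2) V E l V' E' l' v"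
    and "E v u"
  then show "encode r enc V E l (v, u) = encode r enc V' E' l' (v, u)"
    unfolding encode_def using half_edge_label_eq_if_same_view simple_graph_if_bd_tree
    by (metis order.refl)
qed

lemma solves_necp_encode:
  assumes "bd_tree \<Delta> V E" and "inputs_in Sin E i" and "solves_lcl Sin Sout C r V E i out"
  shows "solves_necp (enc ` label_space \<Delta> r Sin Sout) (node_constraints \<Delta> Sin Sout C r enc)
    (edge_constraints \<Delta> Sin Sout r enc) V E i (encode r enc V E (\<lambda>h. (i h, out h)))"
proof -
  have tree: "labelled_tree \<Delta> Sin Sout V E i out"
    using assms unfolding labelled_tree_def solves_lcl_def by blast
  have enc: "encode r enc V E (\<lambda>h. (i h, out h)) = (\<lambda>h. enc (half_edge_label r E i out h))"
    unfolding encode_def by (simp add: o_def)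
  show ?thesis
    unfolding enc solves_necp_def
  proof (intro conjI allI impI ballI)
    fix x y assume "E x y"
    then show "enc (half_edge_label r E i out (x, y)) \<in> enc ` label_space \<Delta> r Sin Sout"
      using half_edge_label_in_label_space[OF tree] by blast
  next
    fix v assume "v \<in> V"
    moreover have "\<exists>H\<in>C. ball_iso V E i out r v H"
      using assms(3) \<open>v \<in> V\<close> unfolding solves_lcl_def by blast
    ultimately show "image_mset (\<lambda>u. (i (v, u), enc (half_edge_label r E i out (v, u))))
          (mset_set {u. E v u})
        \<in> node_constraints \<Delta> Sin Sout C r enc"
      unfolding node_constraints_def using tree by blast
  next
    fix u v assume "E u v"
    then show "{#(i (u, v), enc (half_edge_label r E i out (u, v))),
          (i (v, u), enc (half_edge_label r E i out (v, u)))#}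
        \<in> edge_constraints \<Delta> Sin Sout r enc"
      unfolding edge_constraints_def using tree by blast
  qed
qed

definition decode :: "nat \<Rightarrow> nat \<Rightarrow> 'i set \<Rightarrow> 'o set
    \<Rightarrow> (('i, 'o) label \<Rightarrow> nat)
    \<Rightarrow> nat set \<Rightarrow> (nat \<Rightarrow> nat \<Rightarrow> bool) \<Rightarrow> (nat \<times> nat \<Rightarrow> 'i \<times> nat) \<Rightarrow> nat \<times> nat \<Rightarrow> 'o" where
  "decode \<Delta> r Sin Sout enc V E l h = fst (snd (inv_into (label_space \<Delta> r Sin Sout) enc (snd (l h))))"

lemma local_alg_decode:
  fixes enc :: "('i, 'o) label \<Rightarrow> nat"
  shows "local_alg \<Delta> 1 (decode \<Delta> r Sin Sout enc)"
  unfolding local_alg_def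
proof (intro allI impI)
  fix V E V' E' v u and l l' :: "nat \<times> nat \<Rightarrow> 'i \<times> nat"
  assume view: "bd_tree \<Delta> V E \<and> bd_tree \<Delta> V' E' \<and> v \<in> V \<and> v \<in> V' \<and> same_view 1 V E l V' E' l' v"
    and "E v u"
  then have "u \<in> ball V E 1 v"
    using ball_Suc_if_adjacent[OF _ center_in_ball] simple_graph_if_bd_tree by fastforce
  then have "l (v, u) = l' (v, u)" using view \<open>E v u\<close> center_in_ball unfolding same_view_def by blast
  then show "decode \<Delta> r Sin Sout enc V E l (v, u) = decode \<Delta> r Sin Sout enc V' E' l' (v, u)"
    unfolding decode_def by simp
qed

section \<open>Decoding a solution of the node-edge checkable problem\<close>

lemma inj_on_if_image_eq_image:
  assumes "finite A" and "card A = card B" and "f ` A = g ` B" and "inj_on g B"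
  shows "inj_on f A"
  using assms by (metis card_image inj_on_iff_eq_card)

lemma two_elem_mset_eq: "{#x, y#} = {#x', y'#} \<Longrightarrow> (x = x' \<and> y = y') \<or> (x = y' \<and> y = x')"
  by (auto simp: add_eq_conv_ex)

locale necp_decoding =
  fixes \<Delta> r :: nat and Sin :: "'i set" and Sout :: "'o set" and C :: "('i, 'o) cgraph set"
    and enc :: "('i, 'o) label \<Rightarrow> nat" and Sout' :: "nat set"
    and V E and i :: "nat \<times> nat \<Rightarrow> 'i" and o' :: "nat \<times> nat \<Rightarrow> nat"
  assumes enc_inj: "inj_on enc (label_space \<Delta> r Sin Sout)"
    and tree: "bd_tree \<Delta> V E"
    and solves: "solves_necp Sout' (node_constraints \<Delta> Sin Sout C r enc)
      (edge_constraints \<Delta> Sin Sout r enc) V E i o'"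
begin

definition decoded :: "nat \<times> nat \<Rightarrow> ('i, 'o) label" where
  "decoded h = inv_into (label_space \<Delta> r Sin Sout) enc (o' h)"

definition decoded_port :: "nat \<times> nat \<Rightarrow> nat" where
  "decoded_port h = fst (decoded h)"

definition decoded_out :: "nat \<times> nat \<Rightarrow> 'o" where
  "decoded_out h = fst (snd (decoded h))"

lemma simple: "simple_graph V E"
  using simple_graph_if_bd_tree[OF tree] .

lemma inv_enc_half_edge_label:
  assumes "labelled_tree \<Delta> Sin Sout V' E' i' out'" and "E' a b"
  shows "inv_into (label_space \<Delta> r Sin Sout) enc (enc (half_edge_label r E' i' out' (a, b)))
    = half_edge_label r E' i' out' (a, b)"
  using half_edge_label_in_label_space[OF assms] enc_inj by simp

lemma decoded_eq:
  assumes "labelled_tree \<Delta> Sin Sout V' E' i' out'" and "E' a b"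
    and "o' h = enc (half_edge_label r E' i' out' (a, b))"
  shows "decoded h = half_edge_label r E' i' out' (a, b)"
  using inv_enc_half_edge_label[OF assms(1,2)] assms(3) unfolding decoded_def by simp

text \<open>A witness for the node constraint at v: a correctly labelled tree whose labels around
  v' are those around v.\<close>
definition node_witness :: "nat \<Rightarrow> nat set \<Rightarrow> (nat \<Rightarrow> nat \<Rightarrow> bool) \<Rightarrow> (nat \<times> nat \<Rightarrow> 'i)
    \<Rightarrow> (nat \<times> nat \<Rightarrow> 'o) \<Rightarrow> nat \<Rightarrow> bool" where
  "node_witness v V' E' i' out' v' \<longleftrightarrow> labelled_tree \<Delta> Sin Sout V' E' i' out' \<and> v' \<in> V'
     \<and> (\<exists>H\<in>C. ball_iso V' E' i' out' r v' H)
     \<and> (\<forall>u. E v u \<longrightarrow> (\<exists>u'. E' v' u' \<and> i (v, u) = i' (v', u')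
          \<and> decoded (v, u) = half_edge_label r E' i' out' (v', u')))
     \<and> (\<lambda>u. decoded_port (v, u)) ` {u. E v u} = (\<lambda>u'. rank_port E' (v', u')) ` {u'. E' v' u'}
     \<and> inj_on (\<lambda>u. decoded_port (v, u)) {u. E v u}"

lemma node_witness_if_labels_eq:
  assumes tree': "labelled_tree \<Delta> Sin Sout V' E' i' out'" and "v' \<in> V'"
    and "\<exists>H\<in>C. ball_iso V' E' i' out' r v' H"
    and label_set: "(\<lambda>u. (i (v, u), o' (v, u))) ` {u. E v u}
      = (\<lambda>u. (i' (v', u), enc (half_edge_label r E' i' out' (v', u)))) ` {u. E' v' u}"
    and degree: "card {u. E v u} = card {u. E' v' u}"
  shows "node_witness v V' E' i' out' v'"
proof -
  have sg': "simple_graph V' E'" using tree' simple_graph_if_bd_tree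
    unfolding labelled_tree_def by blast
  have match: "\<exists>u'. E' v' u' \<and> i (v, u) = i' (v', u')
      \<and> decoded (v, u) = half_edge_label r E' i' out' (v', u')" if vu: "E v u" for u
  proof -
    obtain u' where "E' v' u'" "i (v, u) = i' (v', u')"
      "o' (v, u) = enc (half_edge_label r E' i' out' (v', u'))"
      using vu label_set by (auto simp: set_eq_iff image_iff)
    then show ?thesis using decoded_eq[OF tree'] by blast
  qed
  have ports: "(\<lambda>u. decoded_port (v, u)) ` {u. E v u} = (\<lambda>u'. rank_port E' (v', u')) ` {u'. E' v' u'}"
  proof -
    have "(\<lambda>u. decoded_port (v, u)) ` {u. E v u}
        = (\<lambda>x. fst (inv_into (label_space \<Delta> r Sin Sout) enc (snd x)))
            ` (\<lambda>u. (i (v, u), o' (v, u))) ` {u. E v u}"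
      unfolding decoded_port_def decoded_def by (simp add: image_image)
    also have "\<dots> = (\<lambda>u'. rank_port E' (v', u')) ` {u'. E' v' u'}"
      unfolding label_set image_image
      using inv_enc_half_edge_label[OF tree'] by (intro image_cong) (auto simp: half_edge_label_def)
    finally show ?thesis .
  qed
  have "inj_on (\<lambda>u'. rank_port E' (v', u')) {u'. E' v' u'}"
    using port_numbering_rank_port[OF sg'] unfolding port_numbering_def by blast
  then have "inj_on (\<lambda>u. decoded_port (v, u)) {u. E v u}"
    using inj_on_if_image_eq_image[OF finite_neighbours[OF simple] degree ports] by blast
  then show ?thesis
    unfolding node_witness_def using assms(1-3) match ports by blast
qed

lemma node_witness_exists:
  assumes "v \<in> V"
  shows "\<exists>V' E' i' out' v'. node_witness v V' E' i' out' v'"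
proof -
  have "image_mset (\<lambda>u. (i (v, u), o' (v, u))) (mset_set {u. E v u})
      \<in> node_constraints \<Delta> Sin Sout C r enc"
    using solves assms unfolding solves_necp_def by blast
  then obtain V' E' i' out' v' where tree': "labelled_tree \<Delta> Sin Sout V' E' i' out'" and "v' \<in> V'"
    and "\<exists>H\<in>C. ball_iso V' E' i' out' r v' H"
    and labels: "image_mset (\<lambda>u. (i (v, u), o' (v, u))) (mset_set {u. E v u})
       = image_mset (\<lambda>u. (i' (v', u), enc (half_edge_label r E' i' out' (v', u))))
             (mset_set {u. E' v' u})"
    unfolding node_constraints_def by blast
  have "finite {u. E v u}" "finite {u. E' v' u}"
    using finite_neighbours simple tree' simple_graph_if_bd_tree unfolding labelled_tree_def by blast+
  then have "(\<lambda>u. (i (v, u), o' (v, u))) ` {u. E v u}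
      = (\<lambda>u. (i' (v', u), enc (half_edge_label r E' i' out' (v', u)))) ` {u. E' v' u}"
    using arg_cong[OF labels, of set_mset] by simp
  moreover have "card {u. E v u} = card {u. E' v' u}"
    using arg_cong[OF labels, of size] by simp
  ultimately show ?thesis
    using node_witness_if_labels_eq[OF tree' \<open>v' \<in> V'\<close> \<open>\<exists>H\<in>C. _\<close>] by blast
qed

text \<open>Any witness gives the same view once v has a neighbour, since the view is part of the
  decoded labels.\<close>
definition claimed_view :: "nat \<Rightarrow> ('i, 'o) view" where
  "claimed_view v = (SOME F. \<exists>V' E' i' out' v'. node_witness v V' E' i' out' v'
     \<and> F = port_view E' i' out' (rank_port E') r v')"

lemma claimed_view_witness:
  assumes "v \<in> V"
  obtains V' E' i' out' v' where "node_witness v V' E' i' out' v'"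
    and "claimed_view v = port_view E' i' out' (rank_port E') r v'"
proof -
  have "\<exists>F V' E' i' out' v'. node_witness v V' E' i' out' v'
      \<and> F = port_view E' i' out' (rank_port E') r v'"
    using node_witness_exists[OF assms] by blast
  from someI_ex[OF this] show ?thesis using that unfolding claimed_view_def by blast
qed

lemma decoded_view_eq_claimed_view:
  assumes "E v u"
  shows "snd (snd (decoded (v, u))) = claimed_view v"
proof -
  have "v \<in> V" using simple assms unfolding simple_graph_def by blast
  then obtain V' E' i' out' v' where w: "node_witness v V' E' i' out' v'"
    and view: "claimed_view v = port_view E' i' out' (rank_port E') r v'"
    by (rule claimed_view_witness)
  then obtain u' where "E' v' u'" "decoded (v, u) = half_edge_label r E' i' out' (v', u')"
    using assms unfolding node_witness_def by blast
  then show ?thesis using view unfolding half_edge_label_def by simp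
qed

lemma port_numbering_decoded_port: "port_numbering E decoded_port"
  unfolding port_numbering_def
proof
  fix v
  show "inj_on (\<lambda>u. decoded_port (v, u)) {u. E v u}"
  proof (cases "v \<in> V")
    case True
    then show ?thesis using node_witness_exists unfolding node_witness_def by blast
  next
    case False
    then have "{u. E v u} = {}" using simple unfolding simple_graph_def by blast
    then show ?thesis by simp
  qed
qed

definition claimed_local_view :: "nat \<Rightarrow> nat \<Rightarrow> ('i \<times> 'o \<times> nat) option" where
  "claimed_local_view v = the (claimed_view v [])"

lemma claimed_view_Nil: "v \<in> V \<Longrightarrow> claimed_view v [] = Some (claimed_local_view v)"
  using claimed_view_witness unfolding claimed_local_view_def by (metis option.sel port_view_Nil)

lemma claimed_view_beyond_radius: "v \<in> V \<Longrightarrow> r < length w \<Longrightarrow> claimed_view v w = None"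
  using claimed_view_witness unfolding port_view_def by (metis leD)

lemma claimed_view_no_port:
  assumes "v \<in> V" and "port_nbr E decoded_port v q = None"
  shows "claimed_local_view v q = None" and "claimed_view v (q # w) = None"
proof -
  obtain V' E' i' out' v' where w: "node_witness v V' E' i' out' v'"
    and view: "claimed_view v = port_view E' i' out' (rank_port E') r v'"
    using claimed_view_witness[OF assms(1)] by blast
  have "q \<notin> (\<lambda>u. decoded_port (v, u)) ` {u. E v u}" using assms(2) port_nbr_None_iff by fastforce
  then have "q \<notin> (\<lambda>u'. rank_port E' (v', u')) ` {u'. E' v' u'}"
    using w unfolding node_witness_def by simp
  then have "port_nbr E' (rank_port E') v' q = None" using port_nbr_None_iff by fastforce
  then show "claimed_local_view v q = None" and "claimed_view v (q # w) = None"
    unfolding claimed_local_view_def view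
      by (simp_all add: port_view_Nil local_view_None_iff port_view_Cons)
qed

lemma edge_witness:
  assumes "E v u"
  obtains V' E' i' out' a b where "labelled_tree \<Delta> Sin Sout V' E' i' out'" and "E' a b"
    and "decoded (v, u) = half_edge_label r E' i' out' (a, b)"
    and "decoded (u, v) = half_edge_label r E' i' out' (b, a)"
    and "i (v, u) = i' (a, b)"
proof -
  have "{#(i (v, u), o' (v, u)), (i (u, v), o' (u, v))#} \<in> edge_constraints \<Delta> Sin Sout r enc"
    using solves assms unfolding solves_necp_def by blast
  then obtain V' E' i' out' a b where tree': "labelled_tree \<Delta> Sin Sout V' E' i' out'" and "E' a b"
    and labels: "{#(i (v, u), o' (v, u)), (i (u, v), o' (u, v))#}
      = {#(i' (a, b), enc (half_edge_label r E' i' out' (a, b))),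
          (i' (b, a), enc (half_edge_label r E' i' out' (b, a)))#}"
    unfolding edge_constraints_def by blast
  have "E' b a" using tree' \<open>E' a b\<close> simple_graph_if_bd_tree
    unfolding labelled_tree_def simple_graph_def by blast
  from two_elem_mset_eq[OF labels] show ?thesis
  proof
    assume "(i (v, u), o' (v, u)) = (i' (a, b), enc (half_edge_label r E' i' out' (a, b)))
      \<and> (i (u, v), o' (u, v)) = (i' (b, a), enc (half_edge_label r E' i' out' (b, a)))"
    then show ?thesis
      using that[OF tree' \<open>E' a b\<close>] decoded_eq[OF tree' \<open>E' a b\<close>] decoded_eq[OF tree' \<open>E' b a\<close>] by simp
  next
    assume "(i (v, u), o' (v, u)) = (i' (b, a), enc (half_edge_label r E' i' out' (b, a)))
      \<and> (i (u, v), o' (u, v)) = (i' (a, b), enc (half_edge_label r E' i' out' (a, b)))"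
    then show ?thesis
      using that[OF tree' \<open>E' b a\<close>] decoded_eq[OF tree' \<open>E' a b\<close>] decoded_eq[OF tree' \<open>E' b a\<close>] by simp
  qed
qed

lemma decoded_out_in_Sout:
  assumes "E v u"
  shows "decoded_out (v, u) \<in> Sout"
proof -
  obtain V' E' i' out' a b where tree': "labelled_tree \<Delta> Sin Sout V' E' i' out'" and "E' a b"
    and decoded: "decoded (v, u) = half_edge_label r E' i' out' (a, b)"
    and "decoded (u, v) = half_edge_label r E' i' out' (b, a)" and "i (v, u) = i' (a, b)"
    by (rule edge_witness[OF assms])
  have "out' (a, b) \<in> Sout" using tree' \<open>E' a b\<close> unfolding labelled_tree_def by blast
  then show ?thesis using decoded unfolding decoded_out_def half_edge_label_def by simp
qed

lemma claimed_view_edge: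
  assumes "E v u"
  shows "claimed_local_view v (decoded_port (v, u))
      = Some (i (v, u), decoded_out (v, u), decoded_port (u, v))"
    and "length w < r \<Longrightarrow> claimed_view v (decoded_port (v, u) # w) = claimed_view u w"
proof -
  obtain V' E' i' out' a b where tree': "labelled_tree \<Delta> Sin Sout V' E' i' out'" and "E' a b"
    and vu: "decoded (v, u) = half_edge_label r E' i' out' (a, b)"
    and uv: "decoded (u, v) = half_edge_label r E' i' out' (b, a)"
    and "i (v, u) = i' (a, b)"
    using edge_witness[OF assms] by blast
  have "simple_graph V' E'" using tree' simple_graph_if_bd_tree unfolding labelled_tree_def by blast
  then have ab: "port_nbr E' (rank_port E') a (rank_port E' (a, b)) = Some b"
    using port_nbr_Some_iff[OF port_numbering_rank_port] \<open>E' a b\<close> by blast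
  have "E u v" using simple assms unfolding simple_graph_def by blast
  have view_v: "claimed_view v = port_view E' i' out' (rank_port E') r a"
    using decoded_view_eq_claimed_view[OF assms] vu unfolding half_edge_label_def by simp
  have view_u: "claimed_view u = port_view E' i' out' (rank_port E') r b"
    using decoded_view_eq_claimed_view[OF \<open>E u v\<close>] uv unfolding half_edge_label_def by simp
  have ports: "decoded_port (v, u) = rank_port E' (a, b)" "decoded_port (u, v) = rank_port E' (b, a)"
    and "decoded_out (v, u) = out' (a, b)"
    using vu uv unfolding decoded_port_def decoded_out_def half_edge_label_def by simp_all
  then show "claimed_local_view v (decoded_port (v, u))
        = Some (i (v, u), decoded_out (v, u), decoded_port (u, v))"
    unfolding claimed_local_view_def view_v port_view_Nil
    using local_view_Some[OF ab, of i' out'] \<open>i (v, u) = i' (a, b)\<close> by simp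
  show "claimed_view v (decoded_port (v, u) # w) = claimed_view u w" if "length w < r"
    unfolding view_v view_u ports(1) using ab that
      port_view_cong_radius[of w "r - 1" r E' i' out' "rank_port E'" b]
    by (simp add: port_view_Cons)
qed

text \<open>Both sides satisfy the same recursion along edges.\<close>
lemma claimed_view_eq_port_view:
  "v \<in> V \<Longrightarrow> claimed_view v w = port_view E i decoded_out decoded_port r v w"
proof (induction w arbitrary: v)
  case Nil
  have "claimed_local_view v q = local_view E i decoded_out decoded_port v q" for q
  proof (cases "port_nbr E decoded_port v q")
    case None
    then show ?thesis using claimed_view_no_port(1)[OF Nil.prems] local_view_None_iff by metis
  next
    case (Some u)
    then have "E v u" "decoded_port (v, u) = q" using port_nbr_SomeD[OF Some] by auto
    then show ?thesis using claimed_view_edge(1)[OF \<open>E v u\<close>] local_view_Some[OF Some, of i decoded_out]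
      by simp
  qed
  then show ?case using claimed_view_Nil[OF Nil.prems] by (simp add: port_view_Nil fun_eq_iff)
next
  case (Cons q w)
  show ?case
  proof (cases "length (q # w) \<le> r")
    case False
    then show ?thesis using claimed_view_beyond_radius[OF Cons.prems] unfolding port_view_def by simp
  next
    case True
    show ?thesis
    proof (cases "port_nbr E decoded_port v q")
      case None
      then show ?thesis using claimed_view_no_port(2)[OF Cons.prems] by (simp add: port_view_Cons)
    next
      case (Some u)
      then have "E v u" "decoded_port (v, u) = q" using port_nbr_SomeD[OF Some] by auto
      then have "u \<in> V" using simple unfolding simple_graph_def by blast
      have "claimed_view v (q # w) = claimed_view u w"
        using claimed_view_edge(2)[OF \<open>E v u\<close>] \<open>decoded_port (v, u) = q\<close> True by auto
      also have "\<dots> = port_view E i decoded_out decoded_port r u w" using Cons.IH[OF \<open>u \<in> V\<close>] .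
      also have "\<dots> = port_view E i decoded_out decoded_port (r - 1) u w"
        using True by (intro port_view_cong_radius) simp_all
      finally show ?thesis using Some True by (simp add: port_view_Cons)
    qed
  qed
qed

lemma ball_iso_decoded:
  assumes "v \<in> V"
  shows "\<exists>H\<in>C. ball_iso V E i decoded_out r v H"
proof -
  obtain V' E' i' out' v' where w: "node_witness v V' E' i' out' v'"
    and view: "claimed_view v = port_view E' i' out' (rank_port E') r v'"
    using claimed_view_witness[OF assms] by blast
  then obtain H where "H \<in> C" "ball_iso V' E' i' out' r v' H" and "v' \<in> V'"
    and "bd_tree \<Delta> V' E'"
    unfolding node_witness_def labelled_tree_def by blast
  have "port_view E i decoded_out decoded_port r v = port_view E' i' out' (rank_port E') r v'"
    using claimed_view_eq_port_view[OF assms] view by auto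
  then have "ball_iso V E i decoded_out r v (labelled_ball V' E' i' out' r v')"
    using ball_iso_if_port_view_eq[OF simple forest_if_bd_tree[OF tree] port_numbering_decoded_port
        assms simple_graph_if_bd_tree[OF \<open>bd_tree \<Delta> V' E'\<close>] forest_if_bd_tree[OF \<open>bd_tree \<Delta> V' E'\<close>]
        port_numbering_rank_port[OF simple_graph_if_bd_tree[OF \<open>bd_tree \<Delta> V' E'\<close>]] \<open>v' \<in> V'\<close>]
    by blast
  then have "ball_iso V E i decoded_out r v H"
    using ball_iso_trans \<open>ball_iso V' E' i' out' r v' H\<close> by blast
  then show ?thesis using \<open>H \<in> C\<close> by blast
qed

lemma solves_lcl_decoded: "solves_lcl Sin Sout C r V E i decoded_out"
  unfolding solves_lcl_def using decoded_out_in_Sout ball_iso_decoded by blast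

end

lemma solves_lcl_decode:
  assumes "inj_on enc (label_space \<Delta> r Sin Sout)" and "bd_tree \<Delta> V E"
    and "solves_necp Sout' (node_constraints \<Delta> Sin Sout C r enc)
        (edge_constraints \<Delta> Sin Sout r enc) V E i o'"
  shows "solves_lcl Sin Sout C r V E i (decode \<Delta> r Sin Sout enc V E (\<lambda>h. (i h, o' h)))"
proof -
  interpret necp_decoding \<Delta> r Sin Sout C enc Sout' V E i o'
    using assms by unfold_locales
  show ?thesis
    using solves_lcl_decoded unfolding decoded_out_def decoded_def decode_def by simp
qed

theorem claim4p3:
  "\<exists>c::nat. \<forall>(Sin :: 'i set) (Sout :: 'o set) C r \<Delta>. is_lcl Sin Sout C r \<longrightarrow>
     (\<exists>(Sout' :: nat set) CW CB. is_necp Sin Sout' CW CB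
        \<and> (\<exists>T A. T \<le> c * (r + 1) \<and> local_alg \<Delta> T A
             \<and> (\<forall>V E i o'. bd_tree \<Delta> V E \<and> inputs_in Sin E i \<and> solves_necp Sout' CW CB V E i o'
                  \<longrightarrow> solves_lcl Sin Sout C r V E i (A V E (\<lambda>h. (i h, o' h)))))
        \<and> (\<exists>T B. T \<le> c * (r + 1) \<and> local_alg \<Delta> T B
             \<and> (\<forall>V E i out. bd_tree \<Delta> V E \<and> inputs_in Sin E i \<and> solves_lcl Sin Sout C r V E i out
                  \<longrightarrow> solves_necp Sout' CW CB V E i (B V E (\<lambda>h. (i h, out h))))))"
  apply (intro exI[of _ 3] allI impI)
  subgoal premises lcl for Sin Sout C r \<Delta>
  proof -
    have fin: "finite Sin" "finite Sout" using lcl unfolding is_lcl_def by auto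
    obtain enc :: "('i, 'o) label \<Rightarrow> nat" where enc: "inj_on enc (label_space \<Delta> r Sin Sout)"
      using finite_imp_inj_to_nat_seg[OF finite_label_space[OF fin]] by blast
    show ?thesis
      apply (rule exI[of _ "enc ` label_space \<Delta> r Sin Sout"],
          rule exI[of _ "node_constraints \<Delta> Sin Sout C r enc"],
          rule exI[of _ "edge_constraints \<Delta> Sin Sout r enc"], intro conjI)
      subgoal by (rule is_necp_constraints[OF fin])
      subgoal
        using local_alg_decode solves_lcl_decode[OF enc]
        by (intro exI[of _ 1] exI[of _ "decode \<Delta> r Sin Sout enc"] conjI allI impI) auto
      subgoal
        using local_alg_encode solves_necp_encode
        by (intro exI[of _ "r + 2"] exI[of _ "encode r enc"] conjI allI impI) auto
      done
  qed
  done

end
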